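(* Let $A=\mathbb{F}_q[T]$, $\ell\in\mathbb{Z}_{\ge0}$, and $\omega\in C_\infty\smallsetminus K_\infty$ with $|\omega|=|\omega|_i=q^\ell$. Put $\Lambda=A\omega+A$ and $\Delta(\omega)=\Delta_T(\Lambda)$. Then (i) $\log\Delta(\omega)=q^2+q-q^{\ell+1}$. (ii) Let $n\in A$ be nonconstant and $a_1,a_2\in A$, not both zero, with $d_1=\deg a_1<\deg n$, $d_2=\deg a_2<\deg n$ (where $\deg 0=-\infty$), and $u=n^{-1}(a_1\omega+a_2)$. Then $\log u=\ell+d_1-\deg n$ if $d_2\le d_1+\ell$, and $\log u=d_2-\deg n$ if $d_2>d_1+\ell$; and $$\log e^\Lambda(u)=\begin{cases}\frac{q}{q-1}\bigl(q^{\ell+d_1-\deg n}-1\bigr), & \log u\ge0,\\ \log u,&\log u<0.\end{cases}$$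
   Context: $\mathbb{F}_q$ is a finite field with $q$ elements; $K=\mathbb{F}_q(T)$, $A=\mathbb{F}_q[T]$, $K_\infty=\mathbb{F}_q((1/T))$, $C_\infty$ the completion of an algebraic closure of $K_\infty$, with absolute value normalized by $|T|=q$; $\log x=\log_q|x|$ ($\log 0=-\infty$). For $\omega\in C_\infty$, $|\omega|_i:=\inf_{x\in K_\infty}|\omega-x|$. For a rank-$2$ $A$-lattice $\Lambda\subset C_\infty$ (finitely generated discrete $A$-submodule), $e^\Lambda(z)=z\prod_{0\neq\lambda\in\Lambda}(1-z/\lambda)$, and $\Delta_T(\Lambda)$ is the coefficient of $X^{q^2}$ in the unique polynomial $\phi^\Lambda_T(X)=TX+\ell_1X^q+\ell_2X^{q^2}$ with $e^\Lambda(Tz)=\phi^\Lambda_T(e^\Lambda(z))$. *)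

theory Defs
  imports "HOL-Computational_Algebra.Polynomial" "HOL-Library.Extended_Real"
begin

text \<open>These properties characterise
C_infinity (the completion of an algebraic closure of K_infinity, with
the normalisation |T| = q) up to isometric isomorphism.\<close>

definition Fq :: "nat \<Rightarrow> 'c::field set" where
  "Fq q = {x. x ^ q = x}"

definition Aset :: "nat \<Rightarrow> 'c::field \<Rightarrow> 'c set" where
  "Aset q T = {poly f T | f. \<forall>i. coeff f i \<in> Fq q}"

definition Kset :: "nat \<Rightarrow> 'c::field \<Rightarrow> 'c set" where
  "Kset q T = {a / b | a b. a \<in> Aset q T \<and> b \<in> Aset q T \<and> b \<noteq> 0}"

definition Kinf :: "nat \<Rightarrow> ('c::field \<Rightarrow> real) \<Rightarrow> 'c \<Rightarrow> 'c set" where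
  "Kinf q absv T = {x. \<forall>e>0. \<exists>y\<in>Kset q T. absv (x - y) < e}"

definition abs_i :: "nat \<Rightarrow> ('c::field \<Rightarrow> real) \<Rightarrow> 'c \<Rightarrow> 'c \<Rightarrow> real" where
  "abs_i q absv T w = Inf {absv (w - x) | x. x \<in> Kinf q absv T}"

definition conv_to :: "('c::field \<Rightarrow> real) \<Rightarrow> (nat \<Rightarrow> 'c) \<Rightarrow> 'c \<Rightarrow> bool" where
  "conv_to absv X L \<longleftrightarrow> (\<forall>e>0. \<exists>N. \<forall>n\<ge>N. absv (X n - L) < e)"

definition is_Cinfty :: "nat \<Rightarrow> ('c::field \<Rightarrow> real) \<Rightarrow> 'c \<Rightarrow> bool" where
  "is_Cinfty q absv T \<longleftrightarrow>
     (\<exists>p k. prime p \<and> k > 0 \<and> q = p ^ k) \<and>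
     of_nat q = (0::'c) \<and>
     (\<forall>x. absv x \<ge> 0) \<and> (\<forall>x. absv x = 0 \<longleftrightarrow> x = 0) \<and>
     (\<forall>x y. absv (x * y) = absv x * absv y) \<and>
     (\<forall>x y. absv (x + y) \<le> max (absv x) (absv y)) \<and>
     (\<forall>X. (\<forall>e>0. \<exists>N. \<forall>m\<ge>N. \<forall>n\<ge>N. absv (X m - X n) < e)
           \<longrightarrow> (\<exists>L. conv_to absv X L)) \<and>
     (\<forall>f::'c poly. degree f > 0 \<longrightarrow> (\<exists>x. poly f x = 0)) \<and>
     absv T = real q \<and>
     (\<forall>x e. e > 0 \<longrightarrow> (\<exists>y. absv (x - y) < e \<and>
         (\<exists>f::'c poly. f \<noteq> 0 \<and> (\<forall>i. coeff f i \<in> Kset q T) \<and> poly f y = 0)))"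

definition logv :: "nat \<Rightarrow> ('c::field \<Rightarrow> real) \<Rightarrow> 'c \<Rightarrow> ereal" where
  "logv q absv x = (if x = 0 then -\<infinity> else ereal (log (real q) (absv x)))"

definition expL :: "('c::field \<Rightarrow> real) \<Rightarrow> 'c set \<Rightarrow> 'c \<Rightarrow> 'c" where
  "expL absv L z = (THE v. conv_to absv
      (\<lambda>k. z * (\<Prod>l\<in>{l\<in>L - {0}. absv l \<le> real k}. (1 - z / l))) v)"

text \<open>Delta_T(L): coefficient of X^(q^2) in the unique
phi_T(X) = T X + l1 X^q + l2 X^(q^2) with e(T z) = phi_T(e(z)).\<close>
definition DeltaT :: "nat \<Rightarrow> ('c::field \<Rightarrow> real) \<Rightarrow> 'c \<Rightarrow> 'c set \<Rightarrow> 'c" where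
  "DeltaT q absv T L = (THE l2. \<exists>l1. \<forall>z.
      expL absv L (T * z) = T * expL absv L z + l1 * expL absv L z ^ q
                            + l2 * expL absv L z ^ (q ^ 2))"

definition latt :: "nat \<Rightarrow> 'c::field \<Rightarrow> 'c \<Rightarrow> 'c set" where
  "latt q T w = {a * w + b | a b. a \<in> Aset q T \<and> b \<in> Aset q T}"

end

theory Submission
  imports Defs "HOL-Computational_Algebra.Primes"
begin

text \<open>For a finite \<open>F\<^sub>q\<close>-subspace \<open>V\<close> the product \<open>e\<^sub>V(z) = z \<Prod>(1 - z/v)\<close> is \<open>F\<^sub>q\<close>-linear, and
  \<open>e\<^sub>W = e\<^bsub>e\<^sub>V(W)\<^esub> \<circ> e\<^sub>V\<close> for \<open>V \<subseteq> W\<close>; \<open>e\<^sub>\<Lambda>\<close> is the limit of \<open>e\<^sub>V\<close> over the balls \<open>\<Lambda>\<^sub>R\<close> of \<open>\<Lambda>\<close>.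
  The hypothesis \<open>|w|\<^sub>i = |w| = q^l\<close> gives \<open>|a w + b| = max (|a| q^l) |b|\<close> on \<open>\<Lambda>\<close>, so the balls are
  explicit. The ball of radius \<open>R \<ge> q^l\<close> in \<open>T\<^sup>-\<^sup>1\<Lambda>\<close> is \<open>\<Lambda>\<^sub>R\<close> enlarged by \<open>w/T\<close> and \<open>1/T\<close>, so its
  exponential is \<open>e\<^bsub>\<Lambda>\<^sub>R\<^esub>\<close> followed by two explicit \<open>F\<^sub>q\<close>-linear polynomials of degree \<open>q\<close>; letting
  \<open>R \<rightarrow> \<infinity>\<close> yields \<open>\<phi>\<^sub>T\<close> with \<open>\<Delta> = T / (e(1/T)\<^bsup>(q-1)q\<^esup> g\<^bsup>q-1\<^esup>)\<close>, where \<open>g\<close> is built from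
  \<open>e(w/T)\<close> and \<open>e(1/T)\<close>. All absolute values then reduce to \<open>|e\<^sub>\<Lambda>(u)|\<close> for division points \<open>u\<close>:
  when \<open>|u| = q^s < q^l\<close> and no lattice point is closer to \<open>u\<close> than \<open>0\<close>, the only factors of the
  product with \<open>|1 - u/\<lambda>| \<noteq> 1\<close> come from polynomials \<open>\<lambda>\<close> of degree \<open>< s\<close>, and counting them gives
  \<open>|e\<^sub>\<Lambda>(u)| = q^(q + q\<^sup>2 + \<dots> + q^s)\<close>.\<close>

locale ultrametric_abs =
  fixes N :: "'c::field \<Rightarrow> real"
  assumes N_nonneg: "N x \<ge> 0"
    and N_zero_iff: "N x = 0 \<longleftrightarrow> x = 0"
    and N_mult: "N (x * y) = N x * N y"
    and N_add_le_max: "N (x + y) \<le> max (N x) (N y)"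
begin

lemma N_0 [simp]: "N 0 = 0"
  using N_zero_iff by simp

lemma N_pos: "x \<noteq> 0 \<Longrightarrow> N x > 0"
  using N_nonneg[of x] N_zero_iff[of x] by linarith

lemma N_1 [simp]: "N 1 = 1"
  using N_mult[of 1 1] N_pos[of 1] by simp

lemma N_minus [simp]: "N (- x) = N x"
proof -
  have "N (- 1) * N (- 1) = 1"
    using N_mult[of "- 1" "- 1"] by simp
  then have "(N (- 1) - 1) * (N (- 1) + 1) = 0"
    by (simp add: algebra_simps)
  then have "N (- 1) = 1"
    using N_nonneg[of "- 1"] by auto
  then show ?thesis
    using N_mult[of "- 1" x] by simp
qed

lemma N_minus_commute: "N (x - y) = N (y - x)"
  using N_minus[of "x - y"] by simp

lemma N_inverse: "N (inverse x) = inverse (N x)"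
  using N_mult[of x "inverse x"] by (cases "x = 0") (simp_all add: inverse_unique)

lemma N_divide: "N (x / y) = N x / N y"
  by (simp add: divide_inverse N_mult N_inverse)

lemma N_power: "N (x ^ n) = N x ^ n"
  by (induction n) (simp_all add: N_mult)

lemma N_prod: "N (prod f S) = (\<Prod>i\<in>S. N (f i))"
  by (induction S rule: infinite_finite_induct) (auto simp: N_mult)

lemma N_diff_le_max: "N (x - y) \<le> max (N x) (N y)"
  using N_add_le_max[of x "- y"] by simp

lemma N_add_le: "N (x + y) \<le> N x + N y"
  using N_add_le_max[of x y] N_nonneg[of x] N_nonneg[of y] by linarith

lemma N_add_eq_right: "N x < N y \<Longrightarrow> N (x + y) = N y"
  using N_add_le_max[of x y] N_diff_le_max[of "x + y" x] by simp

lemma N_add_eq_left: "N y < N x \<Longrightarrow> N (x + y) = N x"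
  using N_add_eq_right[of y x] by (simp add: add.commute)

lemma N_diff_eq_left: "N y < N x \<Longrightarrow> N (x - y) = N x"
  using N_add_eq_left[of "- y" x] by simp

lemma N_diff_eq_right: "N x < N y \<Longrightarrow> N (x - y) = N y"
  using N_add_eq_right[of x "- y"] by simp

lemma N_add_max: "N x \<noteq> N y \<Longrightarrow> N (x + y) = max (N x) (N y)"
  by (cases "N x < N y") (auto simp: N_add_eq_right N_add_eq_left)

lemma N_abs_diff_le: "\<bar>N x - N y\<bar> \<le> N (x - y)"
  using N_add_le[of "x - y" y] N_add_le[of "y - x" x] N_minus_commute[of x y]
  by (simp add: abs_le_iff)

lemma N_prod_one_plus_le:
  assumes "finite S" "\<And>i. i \<in> S \<Longrightarrow> N (e i) \<le> d" "0 \<le> d" "d \<le> 1"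
  shows "N ((\<Prod>i\<in>S. (1 + e i)) - 1) \<le> d"
  using assms
proof (induction S rule: finite_induct)
  case (insert x F)
  define P where "P = (\<Prod>i\<in>F. (1 + e i))"
  have IH: "N (P - 1) \<le> d"
    using insert by (simp add: P_def)
  have "N P \<le> 1"
    using N_add_le_max[of 1 "P - 1"] IH insert.prems by simp
  then have "N (e x * P) \<le> d"
    using insert.prems N_nonneg[of "e x"] N_nonneg[of P] mult_mono[of "N (e x)" d "N P" 1]
    by (simp add: N_mult)
  moreover have "(\<Prod>i\<in>insert x F. (1 + e i)) - 1 = (P - 1) + e x * P"
    using insert by (simp add: P_def algebra_simps)
  ultimately show ?case
    using N_add_le_max[of "P - 1" "e x * P"] IH by (simp only:)
qed simp

lemma conv_to_iff_LIMSEQ: "conv_to N X a \<longleftrightarrow> (\<lambda>n. N (X n - a)) \<longlonglongrightarrow> 0"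
  unfolding conv_to_def LIMSEQ_def dist_real_def by (simp add: N_nonneg)

lemma conv_to_dominated:
  assumes "\<And>n. N (X n - a) \<le> g n" "g \<longlonglongrightarrow> 0"
  shows "conv_to N X a"
  unfolding conv_to_iff_LIMSEQ
  by (rule real_tendsto_sandwich[OF _ _ tendsto_const assms(2)]) (use assms(1) N_nonneg in auto)

lemma conv_to_unique:
  assumes "conv_to N X a" "conv_to N X b"
  shows "a = b"
proof -
  have "\<And>n. N (a - b) \<le> N (X n - a) + N (X n - b)"
    using N_add_le[of "X n - b" "a - X n" for n] by (simp add: N_minus_commute add.commute)
  then have "conv_to N (\<lambda>_. a) b"
    using assms
    by (intro conv_to_dominated[where g = "\<lambda>n. N (X n - a) + N (X n - b)"])
       (auto intro: tendsto_add_zero simp: conv_to_iff_LIMSEQ)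
  then show ?thesis
    using N_zero_iff by (simp add: conv_to_iff_LIMSEQ LIMSEQ_const_iff)
qed

lemma conv_to_const: "conv_to N (\<lambda>_. c) c"
  by (simp add: conv_to_iff_LIMSEQ)

lemma conv_to_add:
  assumes "conv_to N X a" "conv_to N Y b"
  shows "conv_to N (\<lambda>n. X n + Y n) (a + b)"
proof -
  have "\<And>n. N (X n + Y n - (a + b)) \<le> N (X n - a) + N (Y n - b)"
    using N_add_le[of "X n - a" "Y n - b" for n] by (simp add: algebra_simps)
  then show ?thesis
    using assms
    by (intro conv_to_dominated[where g = "\<lambda>n. N (X n - a) + N (Y n - b)"])
       (auto intro: tendsto_add_zero simp: conv_to_iff_LIMSEQ)
qed

lemma conv_to_N:
  assumes "conv_to N X a"
  shows "(\<lambda>n. N (X n)) \<longlonglongrightarrow> N a"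
proof (rule real_tendsto_sandwich)
  have "(\<lambda>n. N (X n - a)) \<longlonglongrightarrow> 0"
    using assms by (simp add: conv_to_iff_LIMSEQ)
  then show "(\<lambda>n. N a - N (X n - a)) \<longlonglongrightarrow> N a" "(\<lambda>n. N a + N (X n - a)) \<longlonglongrightarrow> N a"
    by (auto intro: tendsto_eq_intros)
  have "N a - N (X n - a) \<le> N (X n)" "N (X n) \<le> N a + N (X n - a)" for n
    using N_abs_diff_le[of "X n" a] by (simp_all add: abs_le_iff)
  then show "\<forall>\<^sub>F n in sequentially. N a - N (X n - a) \<le> N (X n)"
    "\<forall>\<^sub>F n in sequentially. N (X n) \<le> N a + N (X n - a)"
    by (auto intro: always_eventually)
qed

lemma conv_to_mult:
  assumes "conv_to N X a" "conv_to N Y b"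
  shows "conv_to N (\<lambda>n. X n * Y n) (a * b)"
proof -
  have "N (X n * Y n - a * b) \<le> N (X n) * N (Y n - b) + N b * N (X n - a)" for n
  proof -
    have "X n * Y n - a * b = X n * (Y n - b) + b * (X n - a)"
      by (simp add: algebra_simps)
    then show ?thesis
      using N_add_le[of "X n * (Y n - b)" "b * (X n - a)"] by (simp add: N_mult)
  qed
  moreover have "(\<lambda>n. N (X n) * N (Y n - b) + N b * N (X n - a)) \<longlonglongrightarrow> N a * 0 + N b * 0"
    using assms conv_to_N[OF assms(1)] unfolding conv_to_iff_LIMSEQ by (intro tendsto_intros)
  ultimately show ?thesis
    by (intro conv_to_dominated) auto
qed

lemma conv_to_power: "conv_to N X a \<Longrightarrow> conv_to N (\<lambda>n. X n ^ k) (a ^ k)"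
  by (induction k) (simp_all add: conv_to_const conv_to_mult)

lemma conv_to_uminus: "conv_to N X a \<Longrightarrow> conv_to N (\<lambda>n. - X n) (- a)"
  using conv_to_mult[OF conv_to_const, of X a "- 1"] by simp

lemma conv_to_diff: "conv_to N X a \<Longrightarrow> conv_to N Y b \<Longrightarrow> conv_to N (\<lambda>n. X n - Y n) (a - b)"
  using conv_to_add[of X a "\<lambda>n. - Y n" "- b"] conv_to_uminus[of Y b] by simp

lemma conv_to_inverse:
  assumes X: "conv_to N X a" and a: "a \<noteq> 0"
  shows "conv_to N (\<lambda>n. inverse (X n)) (inverse a)"
proof -
  have "eventually (\<lambda>n. N (X n - a) < N a) sequentially"
    using X N_pos[OF a] by (intro order_tendstoD(2)) (simp_all add: conv_to_iff_LIMSEQ)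
  then have "eventually (\<lambda>n. N (X n - a) / (N a * N a) = N (inverse (X n) - inverse a))
      sequentially"
  proof eventually_elim
    case (elim n)
    then have Xn: "N (X n) = N a"
      using N_add_eq_right[of "X n - a" a] by simp
    then have "X n \<noteq> 0"
      using N_pos[OF a] by auto
    then have "inverse (X n) - inverse a = (a - X n) / (X n * a)"
      using a by (simp add: field_simps)
    then show ?case
      by (simp add: N_divide N_mult Xn N_minus_commute)
  qed
  moreover have "(\<lambda>n. N (X n - a) / (N a * N a)) \<longlonglongrightarrow> 0"
    using tendsto_divide_zero[of "\<lambda>n. N (X n - a)" sequentially "N a * N a"] X
    by (simp add: conv_to_iff_LIMSEQ)
  ultimately show ?thesis
    unfolding conv_to_iff_LIMSEQ
    using Lim_transform_eventually[of "\<lambda>n. N (X n - a) / (N a * N a)" 0 sequentially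
        "\<lambda>n. N (inverse (X n) - inverse a)"] by simp
qed

lemma conv_to_divide:
  "conv_to N X a \<Longrightarrow> conv_to N Y b \<Longrightarrow> b \<noteq> 0 \<Longrightarrow> conv_to N (\<lambda>n. X n / Y n) (a / b)"
  using conv_to_mult[OF _ conv_to_inverse] by (simp add: divide_inverse)

lemma conv_to_eventually_eq:
  "conv_to N X a \<Longrightarrow> eventually (\<lambda>n. X n = Y n) sequentially \<Longrightarrow> conv_to N Y a"
  unfolding conv_to_iff_LIMSEQ by (rule Lim_transform_eventually) (auto elim: eventually_mono)

lemma conv_to_subseq:
  "conv_to N X a \<Longrightarrow> (\<And>k. f k \<ge> k) \<Longrightarrow> conv_to N (\<lambda>k. X (f k)) a"
  unfolding conv_to_def by (meson order_trans)

lemma conv_to_N_eventually_const: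
  assumes "conv_to N X a" "eventually (\<lambda>n. N (X n) = B) sequentially"
  shows "N a = B"
  using LIMSEQ_unique[OF conv_to_N[OF assms(1)]] tendsto_eventually[OF assms(2)] by simp

end

locale cinf_field = ultrametric_abs N for N :: "'c::field \<Rightarrow> real" +
  fixes q :: nat and T :: 'c
  assumes q_prime_power: "\<exists>p k. prime p \<and> k > 0 \<and> q = p ^ k"
    and of_nat_q: "of_nat q = (0::'c)"
    and complete: "(\<forall>e>0. \<exists>M. \<forall>m\<ge>M. \<forall>n\<ge>M. N (X m - X n) < e) \<Longrightarrow> \<exists>L. conv_to N X L"
    and alg_closed: "degree (f::'c poly) > 0 \<Longrightarrow> \<exists>x. poly f x = 0"
    and N_T: "N T = real q"
begin

lemma q_ge_2: "q \<ge> 2"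
  using q_prime_power by (metis one_less_power prime_gt_1_nat Suc_1 Suc_leI)

lemma q_gt_1: "real q > 1"
  using q_ge_2 by simp

lemma q_eq_CHAR_power: "\<exists>k. q = CHAR('c) ^ k \<and> prime CHAR('c)"
proof -
  obtain p k where pk: "prime p" "k > 0" "q = p ^ k"
    using q_prime_power by blast
  have dvd: "CHAR('c) dvd p ^ k"
    using of_nat_q pk(3) of_nat_eq_0_iff_char_dvd by blast
  have "CHAR('c) > 0"
    using of_nat_q q_ge_2 CHAR_pos_iff by (metis not_numeral_le_zero gr0I of_nat_0_eq_iff)
  then have prime: "prime CHAR('c)"
    using prime_CHAR_semidom by blast
  then have "CHAR('c) = p"
    using dvd prime_dvd_power pk(1) by (metis prime_nat_iff prime_gt_1_nat less_irrefl)
  then show ?thesis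
    using pk prime by auto
qed

lemma power_q_add: "(x + y :: 'c) ^ q = x ^ q + y ^ q"
  using q_eq_CHAR_power freshmans_dream' by blast

lemma power_q_diff: "(x - y :: 'c) ^ q = x ^ q - y ^ q"
  using power_q_add[of "x - y" y] by simp

lemma power_q_eq: "x ^ q = x * x ^ (q - 1)"
  using q_ge_2 by (simp flip: power_Suc)

subsection \<open>The constant field\<close>

abbreviation FF :: "'c set" where "FF \<equiv> Fq q"

lemma Fq_0 [simp]: "0 \<in> FF"
  using q_ge_2 by (simp add: Fq_def)

lemma Fq_1 [simp]: "1 \<in> FF"
  by (simp add: Fq_def)

lemma Fq_add: "a \<in> FF \<Longrightarrow> b \<in> FF \<Longrightarrow> a + b \<in> FF"
  by (simp add: Fq_def power_q_add)

lemma Fq_mult: "a \<in> FF \<Longrightarrow> b \<in> FF \<Longrightarrow> a * b \<in> FF"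
  by (simp add: Fq_def power_mult_distrib)

lemma Fq_uminus: "a \<in> FF \<Longrightarrow> - a \<in> FF"
proof -
  assume "a \<in> FF"
  then have "a + (- a) ^ q = 0"
    using power_q_add[of a "- a"] q_ge_2 by (simp add: Fq_def zero_power)
  then show ?thesis
    by (simp add: Fq_def eq_neg_iff_add_eq_0 add.commute)
qed

lemma Fq_minus_1: "- 1 \<in> FF"
  by (simp add: Fq_uminus)

lemma Fq_inverse: "a \<in> FF \<Longrightarrow> inverse a \<in> FF"
  by (simp add: Fq_def power_inverse)

lemma Fq_sum: "(\<And>i. i \<in> S \<Longrightarrow> f i \<in> FF) \<Longrightarrow> sum f S \<in> FF"
  by (induction S rule: infinite_finite_induct) (auto intro: Fq_add)

lemma N_Fq: "c \<in> FF \<Longrightarrow> c \<noteq> 0 \<Longrightarrow> N c = 1"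
proof -
  assume c: "c \<in> FF" "c \<noteq> 0"
  then have "N c ^ q = N c"
    by (simp add: Fq_def flip: N_power)
  then have "N c * N c ^ (q - 1) = N c * 1"
    using q_ge_2 by (metis Suc_diff_1 less_le_trans pos2 power_Suc mult_1_right)
  then have "N c ^ (q - 1) = 1 ^ (q - 1)"
    using N_pos[OF c(2)] by simp
  then show ?thesis
    using power_eq_iff_eq_base[of "q - 1" "N c" 1] q_ge_2 N_nonneg[of c] by simp
qed

lemma N_Fq_le: "c \<in> FF \<Longrightarrow> N c \<le> 1"
  by (cases "c = 0") (simp_all add: N_Fq)

lemma separable_poly_splits:
  fixes p :: "'c poly"
  assumes "p \<noteq> 0" "\<And>x. poly p x = 0 \<Longrightarrow> poly (pderiv p) x \<noteq> 0"
  shows "card {x. poly p x = 0} = degree p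
    \<and> p = smult (lead_coeff p) (\<Prod>x\<in>{x. poly p x = 0}. [:- x, 1:])"
  using assms
proof (induction "degree p" arbitrary: p rule: less_induct)
  case (less p)
  show ?case
  proof (cases "degree p = 0")
    case True
    then obtain c where c: "p = [:c:]" "c \<noteq> 0"
      using less.prems(1) degree_eq_zeroE by (metis pCons_0_0)
    then show ?thesis
      by simp
  next
    case False
    then obtain a where a: "poly p a = 0"
      using alg_closed[of p] by auto
    then obtain r where r: "p = [:- a, 1:] * r"
      using poly_eq_0_iff_dvd by blast
    have r0: "r \<noteq> 0"
      using r less.prems by auto
    have deg: "degree p = Suc (degree r)"
      using r r0 degree_mult_eq[of "[:- a, 1:]" r] by simp
    have pd: "pderiv p = r + [:- a, 1:] * pderiv r"
      unfolding r pderiv_mult by (simp add: pderiv_pCons add.commute)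
    have ra: "poly r a \<noteq> 0"
      using less.prems(2)[OF a] pd by simp
    have "poly r x = 0 \<Longrightarrow> poly (pderiv r) x \<noteq> 0" for x
      using less.prems(2)[of x] pd r by auto
    then have IH: "card {x. poly r x = 0} = degree r
        \<and> r = smult (lead_coeff r) (\<Prod>x\<in>{x. poly r x = 0}. [:- x, 1:])"
      using less.hyps[of r] deg r0 by auto
    have roots: "{x. poly p x = 0} = insert a {x. poly r x = 0}"
      using r by auto
    have fin: "finite {x. poly r x = 0}"
      using poly_roots_finite r0 by blast
    have lc: "lead_coeff p = lead_coeff r"
      by (simp only: r lead_coeff_mult) simp
    have "smult (lead_coeff p) (\<Prod>x\<in>{x. poly p x = 0}. [:- x, 1:])
        = [:- a, 1:] * smult (lead_coeff r) (\<Prod>x\<in>{x. poly r x = 0}. [:- x, 1:])"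
      using fin ra unfolding roots lc by (simp add: mult_smult_right)
    then show ?thesis
      using IH fin ra deg r unfolding roots by simp
  qed
qed

definition Xq_minus_X :: "'c poly" where
  "Xq_minus_X = monom 1 q - [:0, 1:]"

lemma degree_Xq_minus_X: "degree Xq_minus_X = q"
  unfolding Xq_minus_X_def using q_ge_2
  by (simp add: degree_monom_eq degree_add_eq_left diff_conv_add_uminus)

lemma Xq_minus_X_nonzero: "Xq_minus_X \<noteq> 0"
  using degree_Xq_minus_X q_ge_2 by auto

lemma lead_coeff_Xq_minus_X: "lead_coeff Xq_minus_X = 1"
  unfolding degree_Xq_minus_X using q_ge_2
  by (simp add: Xq_minus_X_def coeff_monom coeff_pCons split: nat.split)

lemma roots_Xq_minus_X: "{x. poly Xq_minus_X x = 0} = FF"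
  by (auto simp: Xq_minus_X_def Fq_def poly_monom)

text \<open>Since \<open>q = 0\<close> in the field, \<open>X^q - X\<close> is separable.\<close>

lemma pderiv_Xq_minus_X: "pderiv Xq_minus_X = [:- 1:]"
  by (simp add: Xq_minus_X_def pderiv_diff pderiv_monom of_nat_q pderiv_pCons)

lemma finite_Fq: "finite FF"
  using poly_roots_finite[OF Xq_minus_X_nonzero] by (simp add: roots_Xq_minus_X)

lemma card_Fq: "card FF = q"
  and Xq_minus_X_eq_prod: "Xq_minus_X = (\<Prod>x\<in>FF. [:- x, 1:])"
  using separable_poly_splits[OF Xq_minus_X_nonzero] pderiv_Xq_minus_X
  by (simp_all add: degree_Xq_minus_X roots_Xq_minus_X
      lead_coeff_Xq_minus_X[unfolded degree_Xq_minus_X])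

lemma prod_Fq_nonzero_diff: "(\<Prod>c\<in>FF - {0}. (t - c)) = t ^ (q - 1) - 1"
proof -
  have "[:0, 1:] * (\<Prod>x\<in>FF - {0}. [:- x, 1:]) = [:0, 1:] * (monom (1::'c) (q - 1) - 1)"
  proof -
    have "[:0, 1::'c:] * monom 1 (q - 1) = monom 1 q"
      using q_ge_2 by (cases q) (simp_all add: monom_Suc)
    then show ?thesis
      using Xq_minus_X_eq_prod prod.remove[OF finite_Fq Fq_0, of "\<lambda>x. [:- x, 1:]"]
      by (simp add: Xq_minus_X_def algebra_simps)
  qed
  then have "(\<Prod>x\<in>FF - {0}. [:- x, 1:]) = monom (1::'c) (q - 1) - 1"
    by simp
  then have "poly (\<Prod>x\<in>FF - {0}. [:- x, 1:]) t = poly (monom 1 (q - 1) - 1) t"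
    by simp
  then show ?thesis
    by (simp add: poly_prod poly_monom)
qed

lemma prod_Fq_nonzero_one_minus: "(\<Prod>c\<in>FF - {0}. (1 - t / c)) = 1 - t ^ (q - 1)"
proof -
  have "(\<Prod>c\<in>FF - {0}. (1 - t / c)) = (\<Prod>c\<in>FF - {0}. (t - c) / (0 - c))"
    by (intro prod.cong) (auto simp: field_simps)
  also have "\<dots> = (t ^ (q - 1) - 1) / (0 ^ (q - 1) - 1)"
    by (simp only: prod_dividef prod_Fq_nonzero_diff)
  also have "\<dots> = 1 - t ^ (q - 1)"
    using q_ge_2 by (simp add: zero_power)
  finally show ?thesis .
qed

subsection \<open>The polynomial ring \<open>A = F\<^sub>q[T]\<close>\<close>

definition Fq_poly :: "'c poly \<Rightarrow> bool" where
  "Fq_poly f \<longleftrightarrow> (\<forall>i. coeff f i \<in> FF)"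

abbreviation AA :: "'c set" where "AA \<equiv> Aset q T"

lemma AA_iff: "x \<in> AA \<longleftrightarrow> (\<exists>f. Fq_poly f \<and> x = poly f T)"
  by (auto simp: Aset_def Fq_poly_def)

lemma Fq_poly_pCons: "Fq_poly (pCons a p) \<longleftrightarrow> a \<in> FF \<and> Fq_poly p"
  unfolding Fq_poly_def by (metis coeff_pCons_0 coeff_pCons_Suc not0_implies_Suc)

lemma Fq_poly_add: "Fq_poly f \<Longrightarrow> Fq_poly g \<Longrightarrow> Fq_poly (f + g)"
  by (simp add: Fq_poly_def Fq_add)

lemma Fq_poly_uminus: "Fq_poly f \<Longrightarrow> Fq_poly (- f)"
  by (simp add: Fq_poly_def Fq_uminus)

lemma Fq_poly_mult: "Fq_poly f \<Longrightarrow> Fq_poly g \<Longrightarrow> Fq_poly (f * g)"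
  unfolding Fq_poly_def coeff_mult by (auto intro!: Fq_sum Fq_mult)

lemma T_nonzero: "T \<noteq> 0"
  using N_T q_ge_2 by auto

lemma N_poly_T: "Fq_poly f \<Longrightarrow> f \<noteq> 0 \<Longrightarrow> N (poly f T) = real q ^ degree f"
proof (induction f rule: pCons_induct)
  case (pCons a p)
  then have a: "a \<in> FF" and p: "Fq_poly p"
    using Fq_poly_pCons by auto
  show ?case
  proof (cases "p = 0")
    case True
    then show ?thesis
      using pCons.hyps a N_Fq by simp
  next
    case False
    have "N a < real q ^ Suc (degree p)"
      using N_Fq_le[OF a] one_less_power[OF q_gt_1, of "Suc (degree p)"] by linarith
    moreover have "N (T * poly p T) = real q ^ Suc (degree p)"
      using pCons.IH[OF p False] by (simp add: N_mult N_T)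
    ultimately show ?thesis
      using False N_add_eq_right by simp
  qed
qed simp

lemma AA_const: "c \<in> FF \<Longrightarrow> c \<in> AA"
  unfolding AA_iff by (rule exI[of _ "[:c:]"]) (auto simp: Fq_poly_def coeff_pCons split: nat.split)

lemma AA_0 [simp]: "0 \<in> AA"
  using AA_const[OF Fq_0] by simp

lemma AA_T: "T \<in> AA"
  unfolding AA_iff by (rule exI[of _ "[:0, 1:]"]) (auto simp: Fq_poly_def coeff_pCons split: nat.split)

lemma AA_add: "x \<in> AA \<Longrightarrow> y \<in> AA \<Longrightarrow> x + y \<in> AA"
  unfolding AA_iff by (metis Fq_poly_add poly_add)

lemma AA_uminus: "x \<in> AA \<Longrightarrow> - x \<in> AA"
  unfolding AA_iff by (metis Fq_poly_uminus poly_minus)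

lemma AA_diff: "x \<in> AA \<Longrightarrow> y \<in> AA \<Longrightarrow> x - y \<in> AA"
  using AA_add AA_uminus by (metis diff_conv_add_uminus)

lemma AA_mult: "x \<in> AA \<Longrightarrow> y \<in> AA \<Longrightarrow> x * y \<in> AA"
  unfolding AA_iff by (metis Fq_poly_mult poly_mult)

lemma AA_N: "x \<in> AA \<Longrightarrow> x \<noteq> 0 \<Longrightarrow> \<exists>d. N x = real q ^ d"
  unfolding AA_iff using N_poly_T by force

lemma AA_N_ge_1:
  assumes "x \<in> AA" "x \<noteq> 0"
  shows "N x \<ge> 1"
proof -
  obtain d where "N x = real q ^ d"
    using AA_N[OF assms] by blast
  then show ?thesis
    using one_le_power[of "real q" d] q_gt_1 by simp
qed

lemma AA_decomp:
  assumes "x \<in> AA"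
  shows "\<exists>c\<in>FF. \<exists>y\<in>AA. x = c + T * y"
proof -
  obtain f where f: "Fq_poly f" "x = poly f T"
    using assms AA_iff by blast
  obtain c g where "f = pCons c g"
    by (rule pCons_cases)
  then have "c \<in> FF" "poly g T \<in> AA" "x = c + T * poly g T"
    using f Fq_poly_pCons AA_iff by auto
  then show ?thesis
    by blast
qed

lemma AA_div_Kinf: "a \<in> AA \<Longrightarrow> b \<in> AA \<Longrightarrow> b \<noteq> 0 \<Longrightarrow> a / b \<in> Kinf q N T"
  unfolding Kinf_def Kset_def by force

text \<open>\<open>A_below s\<close> is the set of polynomials of degree \<open>< s\<close>.\<close>

definition A_below :: "nat \<Rightarrow> 'c set" where
  "A_below s = {x \<in> AA. N x < real q ^ s}"

lemma A_below_0: "A_below 0 = {0}"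
proof -
  have "x = 0" if "x \<in> AA" "N x < 1" for x
    using that AA_N_ge_1 not_le by blast
  then show ?thesis
    by (auto simp: A_below_def)
qed

lemma A_below_Suc: "A_below (Suc s) = (\<lambda>(c, y). c + T * y) ` (FF \<times> A_below s)"
proof
  have one_less: "1 < real q ^ Suc s"
    using one_less_power[OF q_gt_1] by blast
  show "A_below (Suc s) \<subseteq> (\<lambda>(c, y). c + T * y) ` (FF \<times> A_below s)"
  proof
    fix x assume x: "x \<in> A_below (Suc s)"
    then have "x \<in> AA"
      by (simp add: A_below_def)
    then obtain c y where cy: "c \<in> FF" "y \<in> AA" "x = c + T * y"
      using AA_decomp by blast
    have "real q * N y = N (x - c)"
      using cy by (simp add: N_mult N_T)
    also have "\<dots> < real q * real q ^ s"
      using N_diff_le_max[of x c] N_Fq_le[OF cy(1)] x one_less by (auto simp: A_below_def)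
    finally show "x \<in> (\<lambda>(c, y). c + T * y) ` (FF \<times> A_below s)"
      using cy q_gt_1 by (force simp: A_below_def)
  qed
  show "(\<lambda>(c, y). c + T * y) ` (FF \<times> A_below s) \<subseteq> A_below (Suc s)"
  proof safe
    fix c y assume c: "c \<in> FF" and "y \<in> A_below s"
    then have y: "y \<in> AA" "N (T * y) < real q ^ Suc s"
      using q_gt_1 by (auto simp: A_below_def N_mult N_T)
    have "N (c + T * y) < real q ^ Suc s"
      using N_add_le_max[of c "T * y"] N_Fq_le[OF c] y one_less by simp
    then show "c + T * y \<in> A_below (Suc s)"
      using AA_add AA_mult AA_T AA_const c y by (simp add: A_below_def)
  qed
qed

lemma inj_on_Fq_plus_T_times: "inj_on (\<lambda>(c, y). c + T * y) (FF \<times> AA)"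
proof (rule inj_onI, clarify)
  fix c y c' y'
  assume h: "c \<in> FF" "y \<in> AA" "c' \<in> FF" "y' \<in> AA" "c + T * y = c' + T * y'"
  then have e: "c - c' = T * (y' - y)"
    by (simp add: algebra_simps)
  have "y' = y"
  proof (rule ccontr)
    assume "y' \<noteq> y"
    then have "1 \<le> N (y' - y)"
      using AA_N_ge_1[of "y' - y"] AA_diff h by simp
    then have "1 * 1 < real q * N (y' - y)"
      using q_gt_1 by (intro mult_less_le_imp_less) auto
    then have "N (T * (y' - y)) > 1"
      by (simp add: N_mult N_T)
    moreover have "N (c - c') \<le> 1"
      using N_diff_le_max[of c c'] N_Fq_le[OF h(1)] N_Fq_le[OF h(3)] by linarith
    ultimately show False
      using e by simp
  qed
  then show "c = c' \<and> y = y'"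
    using e by simp
qed

lemma finite_A_below: "finite (A_below s)"
  and card_A_below: "card (A_below s) = q ^ s"
proof (induction s)
  case (Suc s)
  have "inj_on (\<lambda>(c, y). c + T * y) (FF \<times> A_below s)"
    by (rule inj_on_subset[OF inj_on_Fq_plus_T_times]) (auto simp: A_below_def)
  then have "card (A_below (Suc s)) = card FF * card (A_below s)"
    unfolding A_below_Suc by (simp add: card_image card_cartesian_product)
  then show "card (A_below (Suc s)) = q ^ Suc s"
    using Suc.IH card_Fq by simp
  show "finite (A_below (Suc s))"
    unfolding A_below_Suc using Suc.IH finite_Fq by simp
qed (simp_all add: A_below_0)

lemma N_A_below_Suc_diff:
  assumes "b \<in> A_below (Suc s) - A_below s"
  shows "N b = real q ^ s"
proof -
  have b: "b \<in> AA" "N b < real q ^ Suc s" "real q ^ s \<le> N b"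
    using assms by (auto simp: A_below_def)
  moreover have "real q ^ s > 0"
    using q_gt_1 by simp
  ultimately have "N b > 0"
    by linarith
  then have "b \<noteq> 0"
    by auto
  then obtain d where d: "N b = real q ^ d"
    using AA_N b(1) by blast
  have "d = s"
    using power_less_imp_less_exp[OF q_gt_1, of d "Suc s"] power_le_imp_le_exp[OF q_gt_1, of s d]
      b d by simp
  then show ?thesis
    using d by simp
qed

definition qpow_sum :: "nat \<Rightarrow> nat" where
  "qpow_sum s = (\<Sum>t\<in>{1..s}. q ^ t)"

text \<open>There are \<open>q^(j+1) - q^j\<close> polynomials of degree \<open>j\<close>, each contributing the factor
  \<open>q^(s-j)\<close>.\<close>

lemma prod_A_below_ratio:
  "real q ^ s * (\<Prod>b\<in>A_below s - {0}. real q ^ s / N b) = real q ^ qpow_sum s"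
proof (induction s)
  case (Suc s)
  have zero: "0 \<in> A_below s" "0 \<in> A_below (Suc s)"
    using q_gt_1 by (simp_all add: A_below_def)
  have mono: "A_below s \<subseteq> A_below (Suc s)"
    using q_gt_1 by (auto simp: A_below_def less_le_trans)
  have split: "A_below (Suc s) - {0} = (A_below s - {0}) \<union> (A_below (Suc s) - A_below s)"
    using mono zero by auto
  have "(\<Prod>b\<in>A_below (Suc s) - {0}. real q ^ s / N b)
      = (\<Prod>b\<in>A_below s - {0}. real q ^ s / N b) * (\<Prod>b\<in>A_below (Suc s) - A_below s. real q ^ s / N b)"
    unfolding split by (rule prod.union_disjoint) (auto simp: finite_A_below)
  also have "(\<Prod>b\<in>A_below (Suc s) - A_below s. real q ^ s / N b) = 1"
    using q_gt_1 by (simp add: N_A_below_Suc_diff)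
  finally have ratio: "(\<Prod>b\<in>A_below (Suc s) - {0}. real q ^ s / N b)
      = (\<Prod>b\<in>A_below s - {0}. real q ^ s / N b)"
    by simp
  have card: "card (A_below (Suc s) - {0}) = q ^ Suc s - 1"
    using card_A_below[of "Suc s"] zero(2) finite_A_below by simp
  have "(\<Prod>b\<in>A_below (Suc s) - {0}. real q ^ Suc s / N b)
      = (\<Prod>b\<in>A_below (Suc s) - {0}. real q * (real q ^ s / N b))"
    by simp
  also have "\<dots> = real q ^ (q ^ Suc s - 1) * (\<Prod>b\<in>A_below s - {0}. real q ^ s / N b)"
    by (simp only: prod.distrib prod_constant card ratio)
  finally have "real q ^ Suc s * (\<Prod>b\<in>A_below (Suc s) - {0}. real q ^ Suc s / N b)
      = real q ^ Suc (q ^ Suc s - 1) * real q ^ qpow_sum s"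
    using Suc.IH by (simp add: algebra_simps)
  also have "\<dots> = real q ^ qpow_sum (Suc s)"
    using q_ge_2 by (simp add: qpow_sum_def power_add)
  finally show ?case .
qed (simp add: A_below_0 qpow_sum_def)

lemma qpow_sum_eq: "real (qpow_sum m) * (real q - 1) = real q ^ Suc m - real q"
  by (induction m) (simp_all add: qpow_sum_def algebra_simps)

subsection \<open>Exponentials of finite \<open>F\<^sub>q\<close>-subspaces\<close>

definition Fq_subspace :: "'c set \<Rightarrow> bool" where
  "Fq_subspace V \<longleftrightarrow> finite V \<and> 0 \<in> V \<and> (\<forall>x\<in>V. \<forall>y\<in>V. x + y \<in> V) \<and> (\<forall>c\<in>FF. \<forall>x\<in>V. c * x \<in> V)"

lemma Fq_subspaceD:
  assumes "Fq_subspace V"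
  shows "finite V" "0 \<in> V" "x \<in> V \<Longrightarrow> y \<in> V \<Longrightarrow> x + y \<in> V" "c \<in> FF \<Longrightarrow> x \<in> V \<Longrightarrow> c * x \<in> V"
  using assms by (auto simp: Fq_subspace_def)

lemma Fq_subspace_uminus: "Fq_subspace V \<Longrightarrow> x \<in> V \<Longrightarrow> - x \<in> V"
  using Fq_subspaceD(4)[OF _ Fq_minus_1] by fastforce

lemma Fq_subspace_diff: "Fq_subspace V \<Longrightarrow> x \<in> V \<Longrightarrow> y \<in> V \<Longrightarrow> x - y \<in> V"
  using Fq_subspaceD(3)[of V x "- y"] Fq_subspace_uminus[of V y] by simp

definition expV :: "'c set \<Rightarrow> 'c \<Rightarrow> 'c" where
  "expV V z = z * (\<Prod>v\<in>V - {0}. (1 - z / v))"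

lemma expV_0 [simp]: "expV V 0 = 0"
  by (simp add: expV_def)

lemma expV_zero_iff: "finite V \<Longrightarrow> 0 \<in> V \<Longrightarrow> expV V z = 0 \<longleftrightarrow> z \<in> V"
  by (auto simp: expV_def prod_zero_iff field_simps)

lemma expV_eq_poly: "expV V z = poly ([:0, 1:] * (\<Prod>v\<in>V - {0}. [:1, - 1 / v:])) z"
  by (simp add: expV_def poly_prod)

lemma degree_expV_poly:
  fixes V :: "'c set"
  assumes "finite V" "0 \<in> V"
  shows "degree ([:0, 1:] * (\<Prod>v\<in>V - {0}. [:1, - 1 / v:])) = card V"
proof -
  have "degree (\<Prod>v\<in>V - {0}. [:1, - 1 / v:]) = (\<Sum>v\<in>V - {0}. degree [:1, - 1 / v::'c:])"
    by (rule degree_prod_eq_sum_degree) simp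
  also have "\<dots> = card V - 1"
    using assms by simp
  finally have "degree (\<Prod>v\<in>V - {0}. [:1, - 1 / v:]) = card V - 1" .
  moreover have "card V > 0"
    using assms card_gt_0_iff by blast
  ultimately show ?thesis
    using assms by (simp add: degree_mult_eq prod_zero_iff)
qed

lemma prod_add_Fq_subspace:
  assumes V: "Fq_subspace V"
  shows "(\<Prod>v\<in>V. (x + v)) = (\<Prod>v\<in>V - {0}. - v) * expV V x"
proof -
  have "(\<Prod>v\<in>V. (x + v)) = (x + 0) * (\<Prod>v\<in>V - {0}. (x + v))"
    using Fq_subspaceD(1,2)[OF V] by (rule prod.remove)
  also have "(\<Prod>v\<in>V - {0}. (x + v)) = (\<Prod>v\<in>V - {0}. (x + - v))"
    by (rule prod.reindex_bij_witness[of _ uminus uminus]) (auto simp: Fq_subspace_uminus[OF V])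
  also have "\<dots> = (\<Prod>v\<in>V - {0}. (- v) * (1 - x / v))"
    by (intro prod.cong) (auto simp: field_simps)
  also have "\<dots> = (\<Prod>v\<in>V - {0}. - v) * (\<Prod>v\<in>V - {0}. 1 - x / v)"
    by (rule prod.distrib)
  finally show ?thesis
    by (simp only: expV_def add_0_right mult.left_commute)
qed

lemma expV_periodic:
  assumes V: "Fq_subspace V" and y: "y \<in> V"
  shows "expV V (x + y) = expV V x"
proof -
  have "(\<Prod>v\<in>V. (x + y + v)) = (\<Prod>v\<in>V. (x + v))"
    by (rule prod.reindex_bij_witness[of _ "\<lambda>v. v - y" "\<lambda>v. v + y"])
       (auto simp: Fq_subspace_diff[OF V] Fq_subspaceD(3)[OF V] y algebra_simps)
  moreover have "(\<Prod>v\<in>V - {0}. - v) \<noteq> 0"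
    using Fq_subspaceD(1)[OF V] by (simp add: prod_zero_iff)
  ultimately show ?thesis
    by (simp add: prod_add_Fq_subspace[OF V])
qed

text \<open>\<open>expV V (x + y) - expV V x - expV V y\<close> is a polynomial in \<open>y\<close> of degree \<open>< card V\<close>
  vanishing on \<open>V\<close>.\<close>

lemma expV_add:
  assumes V: "Fq_subspace V"
  shows "expV V (x + y) = expV V x + expV V y"
proof -
  have fin: "finite V" and zero: "0 \<in> V"
    using Fq_subspaceD[OF V] by auto
  define p where "p = [:0, 1:] * (\<Prod>v\<in>V - {0}. [:1, - 1 / v:])"
  define n where "n = card V"
  have deg: "degree p = n" and n: "n \<ge> 1"
    using degree_expV_poly[OF fin zero] fin zero card_gt_0_iff
    by (auto simp: p_def n_def Suc_le_eq)
  define D where "D = pcompose p [:x, 1:] - p - [:expV V x:]"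
  have poly_D: "poly D y = expV V (x + y) - expV V y - expV V x" for y
    by (simp add: D_def poly_pcompose p_def expV_eq_poly)
  have "D = 0"
  proof (rule ccontr)
    assume D: "D \<noteq> 0"
    have "degree (pcompose p [:x, 1:]) = n" "coeff (pcompose p [:x, 1:]) n = lead_coeff p"
      using lead_coeff_comp[of "[:x, 1:]" p] deg by (simp_all add: degree_pcompose)
    then have "coeff D n = 0" "degree D \<le> n"
      using deg n by (auto simp: D_def coeff_pCons split: nat.split intro!: degree_diff_le)
    then have "degree D < n"
      using D by (metis le_neq_implies_less leading_coeff_0_iff)
    moreover have "V \<subseteq> {y. poly D y = 0}"
      using poly_D expV_periodic[OF V] expV_zero_iff[OF fin zero] by (auto simp: add.commute)
    then have "n \<le> degree D"
      using card_mono[OF poly_roots_finite[OF D]] card_poly_roots_bound[OF D] n_def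
      by (meson le_trans)
    ultimately show False
      by simp
  qed
  then show ?thesis
    using poly_D[of y] by (simp add: algebra_simps)
qed

lemma expV_uminus: "Fq_subspace V \<Longrightarrow> expV V (- x) = - expV V x"
  using expV_add[of V x "- x"] by (simp add: eq_neg_iff_add_eq_0 add.commute)

lemma expV_diff: "Fq_subspace V \<Longrightarrow> expV V (x - y) = expV V x - expV V y"
  using expV_add[of V x "- y"] expV_uminus[of V y] by simp

lemma expV_smult:
  assumes V: "Fq_subspace V" and c: "c \<in> FF"
  shows "expV V (c * x) = c * expV V x"
proof (cases "c = 0")
  case False
  have "(\<Prod>v\<in>V - {0}. (1 - c * x / v)) = (\<Prod>v\<in>V - {0}. (1 - x / v))"
    by (rule prod.reindex_bij_witness[of _ "\<lambda>v. c * v" "\<lambda>v. inverse c * v"])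
       (use False Fq_subspaceD(4)[OF V c] Fq_subspaceD(4)[OF V Fq_inverse[OF c]]
        in \<open>auto simp: divide_inverse mult.assoc\<close>)
  then show ?thesis
    by (simp add: expV_def)
qed simp

lemma Fq_subspace_expV_image:
  assumes V: "Fq_subspace V" and W: "Fq_subspace W"
  shows "Fq_subspace (expV V ` W)"
  unfolding Fq_subspace_def
proof (intro conjI ballI)
  show "finite (expV V ` W)"
    using Fq_subspaceD(1)[OF W] by simp
  show "0 \<in> expV V ` W"
    using Fq_subspaceD(2)[OF W] expV_0 by (metis image_eqI)
next
  fix a b assume "a \<in> expV V ` W" "b \<in> expV V ` W"
  then obtain x y where "x \<in> W" "y \<in> W" "a = expV V x" "b = expV V y"
    by auto
  then have "a + b = expV V (x + y)" "x + y \<in> W"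
    using expV_add[OF V] Fq_subspaceD(3)[OF W] by auto
  then show "a + b \<in> expV V ` W"
    by blast
next
  fix c a assume c: "c \<in> FF" and "a \<in> expV V ` W"
  then obtain x where "x \<in> W" "a = expV V x"
    by auto
  then have "c * a = expV V (c * x)" "c * x \<in> W"
    using expV_smult[OF V c] Fq_subspaceD(4)[OF W c] by auto
  then show "c * a \<in> expV V ` W"
    by blast
qed

lemma prod_expV_fibre:
  assumes V: "Fq_subspace V" and x0: "x0 \<notin> V"
  shows "(\<Prod>v\<in>V. (1 - z / (x0 + v))) = 1 - expV V z / expV V x0"
proof -
  have fin: "finite V" and zero: "0 \<in> V"
    using Fq_subspaceD[OF V] by auto
  have nonzero: "x0 + v \<noteq> 0" if v: "v \<in> V" for v
  proof
    assume "x0 + v = 0"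
    then have "x0 = - v"
      by (simp add: eq_neg_iff_add_eq_0)
    then show False
      using Fq_subspace_uminus[OF V v] x0 by simp
  qed
  have C: "(\<Prod>v\<in>V - {0}. - v) \<noteq> 0"
    using fin by (simp add: prod_zero_iff)
  have "(\<Prod>v\<in>V. (1 - z / (x0 + v))) = (\<Prod>v\<in>V. ((x0 - z) + v) / (x0 + v))"
    using nonzero by (intro prod.cong) (auto simp: field_simps)
  also have "\<dots> = (\<Prod>v\<in>V. ((x0 - z) + v)) / (\<Prod>v\<in>V. (x0 + v))"
    by (rule prod_dividef)
  also have "\<dots> = expV V (x0 - z) / expV V x0"
    using C by (simp add: prod_add_Fq_subspace[OF V])
  also have "\<dots> = 1 - expV V z / expV V x0"
    using expV_zero_iff[OF fin zero] x0 by (simp add: expV_diff[OF V] field_simps)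
  finally show ?thesis .
qed

lemma expV_fibre_eq_coset:
  assumes V: "Fq_subspace V" and W: "Fq_subspace W" and VW: "V \<subseteq> W" and x0: "x0 \<in> W" "x0 \<notin> V"
  shows "{x. x \<in> W - V \<and> expV V x = expV V x0} = (\<lambda>v. x0 + v) ` V"
proof safe
  have fin: "finite V" and zero: "0 \<in> V"
    using Fq_subspaceD[OF V] by auto
  fix x assume "x \<in> W" "x \<notin> V" "expV V x = expV V x0"
  then have "expV V (x - x0) = 0"
    using expV_diff[OF V] by simp
  then have "x - x0 \<in> V"
    using expV_zero_iff[OF fin zero] by simp
  then show "x \<in> (\<lambda>v. x0 + v) ` V"
    by (rule image_eqI[rotated]) simp
next
  fix v assume v: "v \<in> V"
  then show "x0 + v \<in> W"
    using VW x0 Fq_subspaceD(3)[OF W] by auto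
  show "x0 + v \<in> V \<Longrightarrow> False"
    using Fq_subspace_diff[OF V _ v] x0(2) by fastforce
  show "expV V (x0 + v) = expV V x0"
    using expV_periodic[OF V v] by simp
qed

text \<open>Grouping the factors of \<open>expV W\<close> along the fibres of \<open>expV V\<close>, which are cosets of \<open>V\<close>,
  gives the factors of \<open>expV (expV V ` W)\<close>.\<close>

lemma expV_comp:
  assumes V: "Fq_subspace V" and W: "Fq_subspace W" and VW: "V \<subseteq> W"
  shows "expV W z = expV (expV V ` W) (expV V z)"
proof -
  have finV: "finite V" and zV: "0 \<in> V" and finW: "finite W"
    using Fq_subspaceD[OF V] Fq_subspaceD[OF W] by auto
  define U where "U = expV V ` W"
  define g where "g = (\<lambda>x. 1 - z / x)"
  have "W - {0} = (V - {0}) \<union> (W - V)"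
    using VW zV by auto
  moreover have "(\<Prod>x\<in>(V - {0}) \<union> (W - V). g x) = (\<Prod>x\<in>V - {0}. g x) * (\<Prod>x\<in>W - V. g x)"
    by (rule prod.union_disjoint) (use finV finW in auto)
  ultimately have "expV W z = expV V z * (\<Prod>x\<in>W - V. g x)"
    by (simp add: expV_def g_def)
  also have "(\<Prod>x\<in>W - V. g x) = (\<Prod>y\<in>U - {0}. (\<Prod>x\<in>{x. x \<in> W - V \<and> expV V x = y}. g x))"
    using expV_zero_iff[OF finV zV] finW
    by (intro prod.group[symmetric]) (auto simp: U_def)
  also have "\<dots> = (\<Prod>y\<in>U - {0}. (1 - expV V z / y))"
  proof (rule prod.cong[OF refl])
    fix y assume "y \<in> U - {0}"
    then obtain x0 where x0: "x0 \<in> W" "expV V x0 = y" "y \<noteq> 0"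
      using U_def by auto
    then have x0V: "x0 \<notin> V"
      using expV_zero_iff[OF finV zV] by auto
    have "(\<Prod>x\<in>{x. x \<in> W - V \<and> expV V x = y}. g x) = (\<Prod>v\<in>V. g (x0 + v))"
      unfolding expV_fibre_eq_coset[OF V W VW x0(1) x0V, unfolded x0(2)]
      by (rule prod.reindex[OF inj_onI, unfolded comp_def]) simp
    also have "\<dots> = 1 - expV V z / y"
      unfolding g_def prod_expV_fibre[OF V x0V] x0(2) ..
    finally show "(\<Prod>x\<in>{x. x \<in> W - V \<and> expV V x = y}. g x) = 1 - expV V z / y" .
  qed
  finally show ?thesis
    by (simp add: expV_def U_def)
qed

definition Fq_line :: "'c \<Rightarrow> 'c set" where
  "Fq_line y = (\<lambda>c. c * y) ` FF"

lemma Fq_subspace_line: "Fq_subspace (Fq_line y)"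
  unfolding Fq_subspace_def
proof (intro conjI ballI)
  show "finite (Fq_line y)"
    using finite_Fq by (simp add: Fq_line_def)
  show "0 \<in> Fq_line y"
    unfolding Fq_line_def by (rule image_eqI[of _ _ 0]) simp_all
next
  fix a b assume "a \<in> Fq_line y" "b \<in> Fq_line y"
  then obtain c d where "c \<in> FF" "d \<in> FF" "a = c * y" "b = d * y"
    by (auto simp: Fq_line_def)
  then show "a + b \<in> Fq_line y"
    unfolding Fq_line_def by (intro image_eqI[of _ _ "c + d"]) (auto simp: distrib_right Fq_add)
next
  fix e a assume "e \<in> FF" "a \<in> Fq_line y"
  then obtain c where "c \<in> FF" "a = c * y"
    by (auto simp: Fq_line_def)
  then show "e * a \<in> Fq_line y"
    unfolding Fq_line_def using \<open>e \<in> FF\<close> by (intro image_eqI[of _ _ "e * c"]) (auto simp: Fq_mult)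
qed

lemma self_in_Fq_line: "y \<in> Fq_line y"
  unfolding Fq_line_def by (rule image_eqI[of _ _ 1]) simp_all

lemma expV_line_image_span:
  "expV (Fq_line y) ` {c1 * x + c2 * y | c1 c2. c1 \<in> FF \<and> c2 \<in> FF} = Fq_line (expV (Fq_line y) x)"
  (is "expV _ ` ?S = _")
proof
  have y: "expV (Fq_line y) y = 0"
    using expV_zero_iff Fq_subspaceD(1,2)[OF Fq_subspace_line] self_in_Fq_line by blast
  have eq: "expV (Fq_line y) (c1 * x + c2 * y) = c1 * expV (Fq_line y) x" if "c1 \<in> FF" "c2 \<in> FF" for c1 c2
    using that y by (simp add: expV_add[OF Fq_subspace_line] expV_smult[OF Fq_subspace_line])
  show "expV (Fq_line y) ` ?S \<subseteq> Fq_line (expV (Fq_line y) x)"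
  proof
    fix z assume "z \<in> expV (Fq_line y) ` ?S"
    then obtain c1 c2 where c: "c1 \<in> FF" "c2 \<in> FF" "z = expV (Fq_line y) (c1 * x + c2 * y)"
      by blast
    then have "z = c1 * expV (Fq_line y) x"
      using eq by simp
    then show "z \<in> Fq_line (expV (Fq_line y) x)"
      unfolding Fq_line_def image_iff using c(1) by blast
  qed
  show "Fq_line (expV (Fq_line y) x) \<subseteq> expV (Fq_line y) ` ?S"
  proof
    fix z assume "z \<in> Fq_line (expV (Fq_line y) x)"
    then obtain c where c: "c \<in> FF" "z = c * expV (Fq_line y) x"
      by (auto simp: Fq_line_def)
    then have "z = expV (Fq_line y) (c * x + 0 * y)"
      using eq[of c 0] by simp
    moreover have "c * x + 0 * y \<in> ?S"
      using c(1) Fq_0 by blast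
    ultimately show "z \<in> expV (Fq_line y) ` ?S"
      by blast
  qed
qed

lemma expV_line_prod:
  assumes "y \<noteq> 0"
  shows "expV (Fq_line y) x = x * (\<Prod>c\<in>FF - {0}. (1 - x / (c * y)))"
proof -
  have "Fq_line y - {0} = (\<lambda>c. c * y) ` (FF - {0})"
    using assms by (auto simp: Fq_line_def)
  moreover have "inj_on (\<lambda>c. c * y) (FF - {0})"
    using assms by (auto intro: inj_onI)
  ultimately show ?thesis
    by (simp add: expV_def prod.reindex)
qed

lemma expV_line:
  assumes "y \<noteq> 0"
  shows "expV (Fq_line y) x = x - x ^ q / y ^ (q - 1)"
proof -
  have "expV (Fq_line y) x = x * (\<Prod>c\<in>FF - {0}. (1 - x / (c * y)))"
    by (rule expV_line_prod[OF assms])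
  also have "(\<Prod>c\<in>FF - {0}. (1 - x / (c * y))) = (\<Prod>c\<in>FF - {0}. (1 - (x / y) / c))"
    by (simp add: divide_divide_eq_left mult.commute)
  also have "\<dots> = 1 - (x / y) ^ (q - 1)"
    by (rule prod_Fq_nonzero_one_minus)
  also have "x * (1 - (x / y) ^ (q - 1)) = x - x ^ q / y ^ (q - 1)"
    by (simp add: algebra_simps power_divide power_q_eq)
  finally show ?thesis .
qed

end

locale rank2_lattice = cinf_field N q T for N :: "'c::field \<Rightarrow> real" and q T +
  fixes w :: 'c and l :: nat
  assumes N_w: "N w = real q ^ l"
    and abs_i_w: "abs_i q N T w = real q ^ l"
begin

subsection \<open>The lattice \<open>\<Lambda> = A w + A\<close>\<close>

abbreviation Lat :: "'c set" where "Lat \<equiv> latt q T w"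

lemma Lat_iff: "x \<in> Lat \<longleftrightarrow> (\<exists>a b. a \<in> AA \<and> b \<in> AA \<and> x = a * w + b)"
  by (auto simp: latt_def)

lemma q_power_l_ge_1: "real q ^ l \<ge> 1"
  using q_gt_1 by simp

lemma N_w_diff_Kinf:
  assumes "x \<in> Kinf q N T"
  shows "real q ^ l \<le> N (w - x)"
proof -
  have "Inf {N (w - x) | x. x \<in> Kinf q N T} \<le> N (w - x)"
    by (rule cInf_lower) (use assms N_nonneg in \<open>auto intro!: bdd_belowI[of _ 0]\<close>)
  then show ?thesis
    using abs_i_w by (simp add: abs_i_def)
qed

text \<open>Since \<open>|w|\<^sub>i = |w|\<close>, no cancellation can occur between \<open>a w\<close> and \<open>b\<close>.\<close>

lemma N_latt_elem:
  assumes a: "a \<in> AA" and b: "b \<in> AA"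
  shows "N (a * w + b) = max (N a * real q ^ l) (N b)"
proof (cases "N (a * w) = N b")
  case False
  then show ?thesis
    using N_add_max by (simp add: N_mult N_w)
next
  case True
  show ?thesis
  proof (cases "a = 0")
    case False
    have "real q ^ l \<le> N (w - (- b / a))"
      using N_w_diff_Kinf AA_div_Kinf[OF AA_uminus[OF b] a False] by blast
    moreover have "a * w + b = a * (w - (- b / a))"
      using False by (simp add: field_simps)
    ultimately have "N (a * w + b) \<ge> N a * real q ^ l"
      using N_nonneg[of a] by (simp only: N_mult mult_left_mono)
    moreover have "N (a * w + b) \<le> max (N (a * w)) (N b)"
      by (rule N_add_le_max)
    ultimately show ?thesis
      using True by (simp add: N_mult N_w)
  qed (simp add: N_nonneg)
qed

lemma latt_coords_unique:
  assumes "a \<in> AA" "b \<in> AA" "a' \<in> AA" "b' \<in> AA" "a * w + b = a' * w + b'"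
  shows "a = a' \<and> b = b'"
proof -
  have "(a - a') * w + (b - b') = 0"
    using assms(5) by (simp add: algebra_simps)
  then have "max (N (a - a') * real q ^ l) (N (b - b')) = 0"
    using N_latt_elem[OF AA_diff[OF assms(1,3)] AA_diff[OF assms(2,4)]] by simp
  moreover have "N (a - a') * real q ^ l \<ge> 0"
    using N_nonneg[of "a - a'"] q_power_l_ge_1 by simp
  ultimately have "N (a - a') * real q ^ l = 0" "N (b - b') = 0"
    using N_nonneg[of "b - b'"] max.cobounded1[of "N (a - a') * real q ^ l" "N (b - b')"]
      max.cobounded2[of "N (a - a') * real q ^ l" "N (b - b')"] by linarith+
  then show ?thesis
    using q_ge_2 by (simp add: N_zero_iff)
qed

lemma Lat_0 [simp]: "0 \<in> Lat"
  unfolding Lat_iff by (rule exI[of _ 0], rule exI[of _ 0]) simp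

lemma AA_subset_Lat: "b \<in> AA \<Longrightarrow> b \<in> Lat"
  unfolding Lat_iff by (rule exI[of _ 0], rule exI[of _ b]) simp

lemma Lat_add:
  assumes "x \<in> Lat" "y \<in> Lat"
  shows "x + y \<in> Lat"
proof -
  obtain a b c d where "a \<in> AA" "b \<in> AA" "c \<in> AA" "d \<in> AA" "x = a * w + b" "y = c * w + d"
    using assms unfolding Lat_iff by blast
  then show ?thesis
    unfolding Lat_iff by (intro exI[of _ "a + c"] exI[of _ "b + d"]) (auto simp: AA_add algebra_simps)
qed

lemma Lat_mult_AA:
  assumes c: "c \<in> AA" and "x \<in> Lat"
  shows "c * x \<in> Lat"
proof -
  obtain a b where "a \<in> AA" "b \<in> AA" "x = a * w + b"
    using assms(2) unfolding Lat_iff by blast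
  then show ?thesis
    unfolding Lat_iff using c by (intro exI[of _ "c * a"] exI[of _ "c * b"]) (auto simp: AA_mult algebra_simps)
qed

lemma Lat_smult: "c \<in> FF \<Longrightarrow> x \<in> Lat \<Longrightarrow> c * x \<in> Lat"
  using Lat_mult_AA AA_const by blast

lemma Lat_N_ge_1:
  assumes "x \<in> Lat" "x \<noteq> 0"
  shows "N x \<ge> 1"
proof -
  obtain a b where ab: "a \<in> AA" "b \<in> AA" "x = a * w + b"
    using assms(1) unfolding Lat_iff by blast
  show ?thesis
  proof (cases "a = 0")
    case True
    then show ?thesis
      using ab AA_N_ge_1 assms(2) by simp
  next
    case False
    have "N a * real q ^ l \<ge> 1 * 1"
      using AA_N_ge_1[OF ab(1) False] q_power_l_ge_1 by (intro mult_mono) auto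
    then show ?thesis
      using N_latt_elem[OF ab(1,2)] ab(3) by simp
  qed
qed

definition latt_ball :: "real \<Rightarrow> 'c set" where
  "latt_ball R = {x \<in> Lat. N x \<le> R}"

lemma finite_latt_ball: "finite (latt_ball R)"
proof -
  obtain s where s: "R < real q ^ s"
    using real_arch_pow[OF q_gt_1] by blast
  have "latt_ball R \<subseteq> (\<lambda>(a, b). a * w + b) ` (A_below s \<times> A_below s)"
  proof
    fix x assume "x \<in> latt_ball R"
    then obtain a b where ab: "a \<in> AA" "b \<in> AA" "x = a * w + b" "N x \<le> R"
      unfolding latt_ball_def Lat_iff by blast
    have "N a \<le> N a * real q ^ l"
      using N_nonneg[of a] q_power_l_ge_1 by (simp add: mult_le_cancel_left1)
    then have "N a < real q ^ s" "N b < real q ^ s"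
      using N_latt_elem[OF ab(1,2)] ab s by auto
    then show "x \<in> (\<lambda>(a, b). a * w + b) ` (A_below s \<times> A_below s)"
      using ab by (force simp: A_below_def)
  qed
  then show ?thesis
    by (rule finite_subset) (simp add: finite_A_below)
qed

lemma N_Fq_times_le: "c \<in> FF \<Longrightarrow> N (c * x) \<le> N x"
  using N_Fq_le[of c] N_nonneg[of x] N_nonneg[of c] by (simp add: N_mult mult_left_le_one_le)

lemma Fq_subspace_latt_ball: "R \<ge> 0 \<Longrightarrow> Fq_subspace (latt_ball R)"
  unfolding Fq_subspace_def
proof (intro conjI ballI)
  assume "R \<ge> 0"
  then show "0 \<in> latt_ball R"
    by (simp add: latt_ball_def)
  show "finite (latt_ball R)"
    by (rule finite_latt_ball)
next
  fix x y assume "x \<in> latt_ball R" "y \<in> latt_ball R"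
  then show "x + y \<in> latt_ball R"
    using N_add_le_max[of x y] Lat_add by (auto simp: latt_ball_def)
next
  fix c x assume "c \<in> FF" "x \<in> latt_ball R"
  then show "c * x \<in> latt_ball R"
    using Lat_smult N_Fq_times_le[of c x] by (auto simp: latt_ball_def)
qed

lemma latt_ball_less_1: "R < 1 \<Longrightarrow> latt_ball R \<subseteq> {0}"
  using Lat_N_ge_1 by (force simp: latt_ball_def)

subsection \<open>The exponential function of \<open>\<Lambda>\<close>\<close>

lemma expV_latt_ball_mono:
  assumes "0 \<le> R" "R \<le> R'"
  shows "expV (latt_ball R') z = expV (latt_ball R) z * (\<Prod>x\<in>latt_ball R' - latt_ball R. (1 - z / x))"
proof -
  have "latt_ball R' - {0} = (latt_ball R - {0}) \<union> (latt_ball R' - latt_ball R)"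
    using assms by (auto simp: latt_ball_def)
  moreover have "(\<Prod>x\<in>(latt_ball R - {0}) \<union> (latt_ball R' - latt_ball R). (1 - z / x))
      = (\<Prod>x\<in>latt_ball R - {0}. (1 - z / x)) * (\<Prod>x\<in>latt_ball R' - latt_ball R. (1 - z / x))"
    by (rule prod.union_disjoint) (use finite_latt_ball in auto)
  ultimately show ?thesis
    by (simp add: expV_def mult.assoc)
qed

lemma N_one_minus_div_outside_ball:
  assumes "0 < R" "N z \<le> R" "x \<in> latt_ball R' - latt_ball R"
  shows "N (z / x) \<le> N z / R" "N (1 - z / x) = 1"
proof -
  have Nx: "N x > R"
    using assms by (auto simp: latt_ball_def)
  then show "N (z / x) \<le> N z / R"
    using assms N_nonneg[of z] by (simp add: N_divide frac_le)
  have "N (z / x) < 1"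
    using Nx assms by (simp add: N_divide divide_less_eq)
  then show "N (1 - z / x) = 1"
    using N_diff_eq_left[of "z / x" 1] by simp
qed

lemma N_expV_latt_ball_stable:
  assumes "0 < R" "N z \<le> R" "R \<le> R'"
  shows "N (expV (latt_ball R') z) = N (expV (latt_ball R) z)"
proof -
  have "(\<Prod>x\<in>latt_ball R' - latt_ball R. N (1 - z / x)) = 1"
    using N_one_minus_div_outside_ball(2)[OF assms(1,2)] by (intro prod.neutral) blast
  then show ?thesis
    using expV_latt_ball_mono[of R R' z] assms by (simp add: N_mult N_prod)
qed

definition exp_partial :: "'c \<Rightarrow> nat \<Rightarrow> 'c" where
  "exp_partial z k = expV (latt_ball (real k)) z"

abbreviation eL :: "'c \<Rightarrow> 'c" where "eL \<equiv> expL N Lat"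

lemma exp_partial_Cauchy:
  assumes e: "e > 0"
  shows "\<exists>K. \<forall>m\<ge>K. \<forall>n\<ge>K. N (exp_partial z m - exp_partial z n) < e"
proof -
  define R0 where "R0 = max (N z) 1"
  define M where "M = N (expV (latt_ball R0) z)"
  obtain K0 :: nat where K0: "R0 \<le> real K0"
    using real_arch_simple by blast
  obtain K1 :: nat where K1: "M * N z / e < real K1"
    using reals_Archimedean2 by blast
  have R0: "R0 > 0" "N z \<le> R0"
    by (auto simp: R0_def)
  have key: "N (exp_partial z n - exp_partial z m) < e" if m: "max K0 K1 \<le> m" "m \<le> n" for m n
  proof -
    define P where "P = (\<Prod>x\<in>latt_ball (real n) - latt_ball (real m). (1 - z / x))"
    have m_ge: "real m \<ge> R0" "real m > 0"
      using m K0 R0 by auto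
    have "exp_partial z n - exp_partial z m = exp_partial z m * (P - 1)"
      using expV_latt_ball_mono[of "real m" "real n" z] m
      by (simp add: exp_partial_def P_def algebra_simps)
    then have "N (exp_partial z n - exp_partial z m) = M * N (P - 1)"
      using N_expV_latt_ball_stable[OF R0 m_ge(1)] by (simp add: N_mult exp_partial_def M_def)
    also have "\<dots> \<le> M * (N z / real m)"
    proof (rule mult_left_mono)
      have "N ((\<Prod>x\<in>latt_ball (real n) - latt_ball (real m). (1 + - z / x)) - 1) \<le> N z / real m"
      proof (rule N_prod_one_plus_le)
        show "finite (latt_ball (real n) - latt_ball (real m))"
          by (simp add: finite_latt_ball)
        show "N (- z / x) \<le> N z / real m" if "x \<in> latt_ball (real n) - latt_ball (real m)" for x
          using N_one_minus_div_outside_ball(1)[OF m_ge(2) _ that] m_ge R0 by simp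
        show "0 \<le> N z / real m" "N z / real m \<le> 1"
          using m_ge R0 N_nonneg[of z] by simp_all
      qed
      then show "N (P - 1) \<le> N z / real m"
        by (simp add: P_def)
      show "0 \<le> M"
        by (simp add: M_def N_nonneg)
    qed
    also have "\<dots> < e"
    proof -
      have "M * N z / e < real m"
        using K1 m by linarith
      then have "M * N z < e * real m"
        using e by (simp add: divide_less_eq mult.commute)
      then show ?thesis
        using m_ge by (simp add: divide_less_eq)
    qed
    finally show ?thesis .
  qed
  show ?thesis
    using key N_minus_commute by (metis max.commute nle_le)
qed

lemma eL_conv: "conv_to N (exp_partial z) (eL z)"
proof -
  obtain L where L: "conv_to N (exp_partial z) L"
    using complete exp_partial_Cauchy by blast
  have partial: "(\<lambda>k. z * (\<Prod>x\<in>{x \<in> Lat - {0}. N x \<le> real k}. (1 - z / x))) = exp_partial z"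
  proof
    fix k
    have "{x \<in> Lat - {0}. N x \<le> real k} = latt_ball (real k) - {0}"
      by (auto simp: latt_ball_def)
    then show "z * (\<Prod>x\<in>{x \<in> Lat - {0}. N x \<le> real k}. (1 - z / x)) = exp_partial z k"
      by (simp add: exp_partial_def expV_def)
  qed
  have "eL z = (THE v. conv_to N (exp_partial z) v)"
    unfolding expL_def partial ..
  also have "\<dots> = L"
    using L conv_to_unique by blast
  finally show ?thesis
    using L by simp
qed

lemma N_eL:
  assumes "0 < R" "N z \<le> R"
  shows "N (eL z) = N (expV (latt_ball R) z)"
proof (rule conv_to_N_eventually_const[OF eL_conv])
  obtain K :: nat where "R \<le> real K"
    using real_arch_simple by blast
  then show "\<forall>\<^sub>F n in sequentially. N (exp_partial z n) = N (expV (latt_ball R) z)"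
    unfolding exp_partial_def eventually_sequentially
    using N_expV_latt_ball_stable assms by (meson of_nat_le_iff order_trans)
qed

lemma eL_add: "eL (x + y) = eL x + eL y"
proof -
  have "exp_partial (x + y) = (\<lambda>n. exp_partial x n + exp_partial y n)"
    by (rule ext) (simp add: exp_partial_def expV_add[OF Fq_subspace_latt_ball])
  then show ?thesis
    using conv_to_add[OF eL_conv eL_conv, of x y] eL_conv conv_to_unique by metis
qed

lemma eL_smult:
  assumes "c \<in> FF"
  shows "eL (c * x) = c * eL x"
proof -
  have "exp_partial (c * x) = (\<lambda>n. c * exp_partial x n)"
    by (rule ext) (simp add: exp_partial_def expV_smult[OF Fq_subspace_latt_ball assms])
  then show ?thesis
    using conv_to_mult[OF conv_to_const eL_conv, of c x] eL_conv conv_to_unique by metis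
qed

lemma eL_diff: "eL (x - y) = eL x - eL y"
  using eL_add[of x "- y"] eL_smult[OF Fq_minus_1, of y] by simp

lemma N_eL_small: "N z < 1 \<Longrightarrow> N (eL z) = N z"
proof (cases "z = 0")
  case True
  then show ?thesis
    using eL_smult[OF Fq_0, of 0] by simp
next
  case False
  assume "N z < 1"
  then have "latt_ball (N z) = {0}"
    using latt_ball_less_1 N_nonneg[of z] by (auto simp: latt_ball_def)
  then show ?thesis
    using N_eL[of "N z" z] N_pos[OF False] by (simp add: expV_def)
qed

subsection \<open>Absolute values of \<open>e\<^sub>\<Lambda>\<close> at division points\<close>

lemma N_Lat_diff_quotient_ge:
  assumes a1: "a1 \<in> AA" and a2: "a2 \<in> AA" and n: "n \<in> AA" and x: "x \<in> Lat"
    and a1_n: "N a1 < N n" and a2_a1: "N a2 \<le> N a1 * real q ^ l"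
  defines "u \<equiv> (a1 * w + a2) / n"
  shows "N u \<le> N (x - u)"
proof -
  have n0: "n \<noteq> 0"
    using a1_n N_nonneg[of a1] by auto
  obtain a b where ab: "a \<in> AA" "b \<in> AA" "x = a * w + b"
    using x unfolding Lat_iff by blast
  define c where "c = n * a - a1"
  have cA: "c \<in> AA"
    using ab a1 n by (simp add: c_def AA_diff AA_mult)
  have Nc: "N c \<ge> N a1"
  proof (cases "a = 0")
    case False
    have "N n * 1 \<le> N n * N a"
      using AA_N_ge_1[OF ab(1) False] N_nonneg[of n] by (intro mult_left_mono)
    then have "N (n * a) \<ge> N n * 1"
      by (simp add: N_mult)
    then have "N c = N (n * a)"
      unfolding c_def using a1_n by (intro N_diff_eq_left) simp
    then show ?thesis
      using \<open>N (n * a) \<ge> N n * 1\<close> a1_n by simp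
  qed (simp add: c_def)
  have "n * (x - u) = c * w + (n * b - a2)"
    using n0 ab by (simp add: u_def c_def field_simps)
  then have "N (n * (x - u)) = max (N c * real q ^ l) (N (n * b - a2))"
    using N_latt_elem[OF cA] ab n a2 by (simp add: AA_diff AA_mult)
  then have "N n * N (x - u) \<ge> N a1 * real q ^ l"
    using Nc q_power_l_ge_1 by (smt (verit) mult_right_mono N_mult)
  moreover have "N u = N a1 * real q ^ l / N n"
    using N_latt_elem[OF a1 a2] a2_a1 by (simp add: u_def N_divide)
  moreover have "N n > 0"
    using a1_n N_nonneg[of a1] by linarith
  ultimately show ?thesis
    by (simp add: divide_le_eq mult.commute)
qed

lemma small_latt_ball_eq_A_below:
  assumes "s < l"
  shows "{x \<in> latt_ball (real q ^ s) - {0}. N x < real q ^ s} = A_below s - {0}"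
proof safe
  fix x assume x: "x \<in> latt_ball (real q ^ s)" "x \<noteq> 0" "N x < real q ^ s"
  then obtain a b where ab: "a \<in> AA" "b \<in> AA" "x = a * w + b"
    unfolding latt_ball_def Lat_iff by blast
  have "a = 0"
  proof (rule ccontr)
    assume "a \<noteq> 0"
    then have "N a * real q ^ l \<ge> 1 * real q ^ l"
      using AA_N_ge_1[OF ab(1)] q_power_l_ge_1 by (intro mult_right_mono) auto
    then have "N x \<ge> real q ^ l"
      using N_latt_elem[OF ab(1,2)] ab(3) by simp
    moreover have "real q ^ s < real q ^ l"
      using assms q_gt_1 by simp
    ultimately show False
      using x by simp
  qed
  then show "x \<in> A_below s"
    using ab x by (simp add: A_below_def)
next
  fix x assume "x \<in> A_below s"
  then show "x \<in> latt_ball (real q ^ s)" "N x < real q ^ s"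
    using AA_subset_Lat by (auto simp: A_below_def latt_ball_def)
qed

text \<open>If \<open>|u| = q^s < q^l\<close> and no lattice point is closer to \<open>u\<close> than \<open>0\<close>, then the factors of
  \<open>e\<^sub>\<Lambda>(u)\<close> with \<open>|\<lambda>| = |u|\<close> have absolute value \<open>1\<close> and the others are counted by
  \<open>prod_A_below_ratio\<close>.\<close>

lemma N_eL_far_from_Lat:
  assumes s: "s < l" and Nu: "N u = real q ^ s" and far: "\<And>x. x \<in> Lat \<Longrightarrow> N u \<le> N (x - u)"
  shows "N (eL u) = real q ^ qpow_sum s"
proof -
  define R where "R = real q ^ s"
  have R0: "R > 0"
    using q_gt_1 by (simp add: R_def)
  define A where "A = {x \<in> latt_ball R - {0}. N x < R}"
  define B where "B = {x \<in> latt_ball R - {0}. \<not> N x < R}"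
  have split: "latt_ball R - {0} = A \<union> B"
    by (auto simp: A_def B_def)
  have fin: "finite A" "finite B"
    using finite_latt_ball by (auto simp: A_def B_def)
  have B1: "N (1 - u / x) = 1" if x: "x \<in> B" for x
  proof -
    have Nx: "N x = R" "x \<noteq> 0" "x \<in> Lat"
      using x by (auto simp: B_def latt_ball_def)
    have "N (x - u) = R"
      using far[OF Nx(3)] N_diff_le_max[of x u] Nx Nu by (simp add: R_def)
    moreover have "1 - u / x = (x - u) / x"
      using Nx by (simp add: field_simps)
    ultimately show ?thesis
      using Nx R0 by (simp add: N_divide)
  qed
  have A_ratio: "N (1 - u / x) = R / N x" if x: "x \<in> A_below s - {0}" for x
  proof -
    have Nx: "N x < R" "x \<noteq> 0"
      using x by (auto simp: A_below_def R_def)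
    have "N (x - u) = R"
      using N_diff_eq_right[of x u] Nx Nu by (simp add: R_def)
    moreover have "1 - u / x = (x - u) / x"
      using Nx by (simp add: field_simps)
    ultimately show ?thesis
      by (simp add: N_divide)
  qed
  have "N (expV (latt_ball R) u) = N u * (\<Prod>x\<in>latt_ball R - {0}. N (1 - u / x))"
    by (simp add: expV_def N_mult N_prod)
  also have "(\<Prod>x\<in>latt_ball R - {0}. N (1 - u / x)) = (\<Prod>x\<in>A. N (1 - u / x)) * (\<Prod>x\<in>B. N (1 - u / x))"
    unfolding split by (rule prod.union_disjoint) (use fin in \<open>auto simp: A_def B_def\<close>)
  also have "(\<Prod>x\<in>B. N (1 - u / x)) = 1"
    using B1 by simp
  also have "(\<Prod>x\<in>A. N (1 - u / x)) = (\<Prod>x\<in>A_below s - {0}. R / N x)"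
    unfolding A_def R_def small_latt_ball_eq_A_below[OF s] using A_ratio by (simp add: R_def)
  finally have "N (expV (latt_ball R) u) = real q ^ s * (\<Prod>x\<in>A_below s - {0}. real q ^ s / N x)"
    using Nu by (simp add: R_def)
  also have "\<dots> = real q ^ qpow_sum s"
    by (rule prod_A_below_ratio)
  finally show ?thesis
    using N_eL[OF R0] Nu by (simp add: R_def)
qed

lemma N_eL_quotient:
  assumes a1: "a1 \<in> AA" "N a1 = real q ^ d1" and n: "n \<in> AA" "N n = real q ^ dn"
    and a2: "a2 \<in> AA" "N a2 \<le> N a1 * real q ^ l"
    and d: "d1 < dn" "dn \<le> l + d1"
  shows "N ((a1 * w + a2) / n) = real q ^ (l + d1 - dn)"
    and "N (eL ((a1 * w + a2) / n)) = real q ^ qpow_sum (l + d1 - dn)"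
proof -
  have "N ((a1 * w + a2) / n) = real q ^ (d1 + l) / real q ^ dn"
    using N_latt_elem[OF a1(1) a2(1)] a1 n a2 by (simp add: N_divide power_add)
  also have "\<dots> = real q ^ (l + d1 - dn)"
    using d q_gt_1 by (simp add: power_diff add.commute)
  finally show Nu: "N ((a1 * w + a2) / n) = real q ^ (l + d1 - dn)" .
  have "N a1 < N n"
    using a1 n d q_gt_1 by simp
  then show "N (eL ((a1 * w + a2) / n)) = real q ^ qpow_sum (l + d1 - dn)"
    using N_eL_far_from_Lat[OF _ Nu] N_Lat_diff_quotient_ge[OF a1(1) a2(1) n(1) _ _ a2(2)] d
    by simp
qed

subsection \<open>The functional equation\<close>

definition Tinv_ball :: "real \<Rightarrow> 'c set" where
  "Tinv_ball R = {x. T * x \<in> Lat \<and> N x \<le> R}"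

lemma N_div_T: "N (x / T) = N x / real q"
  by (simp add: N_divide N_T)

lemma Tinv_ball_eq_image: "Tinv_ball R = (\<lambda>m. m / T) ` latt_ball (real q * R)"
proof safe
  fix x assume x: "x \<in> Tinv_ball R"
  have "T * x \<in> latt_ball (real q * R)"
    using x q_gt_1 by (simp add: Tinv_ball_def latt_ball_def N_mult N_T)
  moreover have "x = (T * x) / T"
    using T_nonzero by simp
  ultimately show "x \<in> (\<lambda>m. m / T) ` latt_ball (real q * R)"
    by blast
next
  fix m assume m: "m \<in> latt_ball (real q * R)"
  have "N (m / T) \<le> R"
    using m q_gt_1 by (simp add: latt_ball_def N_div_T divide_le_eq mult.commute)
  then show "m / T \<in> Tinv_ball R"
    using m T_nonzero by (simp add: Tinv_ball_def latt_ball_def)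
qed

lemma Fq_subspace_Tinv_ball: "R \<ge> 0 \<Longrightarrow> Fq_subspace (Tinv_ball R)"
  unfolding Fq_subspace_def
proof (intro conjI ballI)
  assume R: "R \<ge> 0"
  show "finite (Tinv_ball R)"
    unfolding Tinv_ball_eq_image using finite_latt_ball by simp
  show "0 \<in> Tinv_ball R"
    using R by (simp add: Tinv_ball_def)
next
  fix x y assume "x \<in> Tinv_ball R" "y \<in> Tinv_ball R"
  then show "x + y \<in> Tinv_ball R"
    using Lat_add[of "T * x" "T * y"] N_add_le_max[of x y] by (auto simp: Tinv_ball_def distrib_left)
next
  fix c x assume c: "c \<in> FF" and x: "x \<in> Tinv_ball R"
  then have "T * (c * x) \<in> Lat"
    using Lat_smult[OF c, of "T * x"] by (simp add: Tinv_ball_def mult.left_commute)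
  then show "c * x \<in> Tinv_ball R"
    using x N_Fq_times_le[OF c, of x] by (simp add: Tinv_ball_def)
qed

lemma latt_ball_subset_Tinv_ball: "latt_ball R \<subseteq> Tinv_ball R"
  using Lat_mult_AA[OF AA_T] by (auto simp: latt_ball_def Tinv_ball_def)

lemma expV_latt_ball_T_times:
  assumes "R \<ge> 0"
  shows "expV (latt_ball (real q * R)) (T * z) = T * expV (Tinv_ball R) z"
proof -
  have "(\<Prod>x\<in>Tinv_ball R - {0}. (1 - z / x)) = (\<Prod>m\<in>latt_ball (real q * R) - {0}. (1 - T * z / m))"
  proof (rule prod.reindex_bij_witness[of "Tinv_ball R - {0}" "\<lambda>m. m / T" "\<lambda>x. T * x"])
    fix x assume x: "x \<in> Tinv_ball R - {0}"
    show "T * x / T = x" "1 - T * z / (T * x) = 1 - z / x"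
      using T_nonzero by simp_all
    show "T * x \<in> latt_ball (real q * R) - {0}"
      using x T_nonzero Tinv_ball_eq_image by auto
  next
    fix m assume m: "m \<in> latt_ball (real q * R) - {0}"
    show "T * (m / T) = m"
      using T_nonzero by simp
    show "m / T \<in> Tinv_ball R - {0}"
      using m T_nonzero Tinv_ball_eq_image by auto
  qed
  then show ?thesis
    by (simp add: expV_def mult.assoc)
qed

lemma Fq_comb_div_T_in_Tinv_ball:
  assumes R: "R \<ge> real q ^ l" and c: "c1 \<in> FF" "c2 \<in> FF"
  shows "c1 * (w / T) + c2 * (1 / T) \<in> Tinv_ball R"
proof -
  have eq: "c1 * (w / T) + c2 * (1 / T) = (c1 * w + c2) / T"
    by (simp add: field_simps T_nonzero)
  have "N (c1 * w + c2) \<le> real q ^ l"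
    using N_latt_elem[OF AA_const[OF c(1)] AA_const[OF c(2)]] N_Fq_le[OF c(1)] N_Fq_le[OF c(2)]
      q_power_l_ge_1 N_nonneg[of c1] by (simp add: mult_left_le_one_le max.bounded_iff)
  moreover have "N (c1 * w + c2) / real q \<le> N (c1 * w + c2)"
    using q_gt_1 N_nonneg[of "c1 * w + c2"] by (simp add: divide_le_eq mult_le_cancel_left1)
  ultimately have "N ((c1 * w + c2) / T) \<le> R"
    using R by (simp add: N_div_T)
  moreover have "c1 * w + c2 \<in> Lat"
    unfolding Lat_iff using c by (auto intro: AA_const)
  ultimately show ?thesis
    unfolding eq Tinv_ball_def using T_nonzero by simp
qed

lemma Tinv_ball_decomp:
  assumes R: "R \<ge> real q ^ l" and x: "x \<in> Tinv_ball R"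
  shows "\<exists>c1\<in>FF. \<exists>c2\<in>FF. \<exists>m\<in>latt_ball R. x = c1 * (w / T) + c2 * (1 / T) + m"
proof -
  obtain a b where ab: "a \<in> AA" "b \<in> AA" "T * x = a * w + b"
    using x unfolding Tinv_ball_def Lat_iff by blast
  obtain c1 a' where a': "c1 \<in> FF" "a' \<in> AA" "a = c1 + T * a'"
    using AA_decomp[OF ab(1)] by blast
  obtain c2 b' where b': "c2 \<in> FF" "b' \<in> AA" "b = c2 + T * b'"
    using AA_decomp[OF ab(2)] by blast
  define m where "m = a' * w + b'"
  have m: "m \<in> Lat"
    unfolding m_def Lat_iff using a' b' by blast
  have "T * x = T * (c1 * (w / T) + c2 * (1 / T) + m)"
    using ab a' b' T_nonzero by (simp add: m_def field_simps)
  then have x_eq: "x = c1 * (w / T) + c2 * (1 / T) + m"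
    using T_nonzero by simp
  have "m = x - (c1 * (w / T) + c2 * (1 / T))"
    using x_eq by simp
  then have "N m \<le> max (N x) (N (c1 * (w / T) + c2 * (1 / T)))"
    using N_diff_le_max by metis
  moreover have "N x \<le> R" "N (c1 * (w / T) + c2 * (1 / T)) \<le> R"
    using x Fq_comb_div_T_in_Tinv_ball[OF R a'(1) b'(1)] by (simp_all add: Tinv_ball_def)
  ultimately have "m \<in> latt_ball R"
    using m by (simp add: latt_ball_def)
  then show ?thesis
    using x_eq a'(1) b'(1) by blast
qed

lemma inverse_T_notin_Lat: "1 / T \<notin> Lat"
proof
  assume "1 / T \<in> Lat"
  then have "N (1 / T) \<ge> 1"
    using Lat_N_ge_1 T_nonzero by simp
  moreover have "N (1 / T) < 1"
    using q_gt_1 by (simp add: N_div_T)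
  ultimately show False
    by simp
qed

lemma w_minus_Fq_div_T_notin_Lat:
  assumes c: "c \<in> FF"
  shows "(w - c) / T \<notin> Lat"
proof
  assume "(w - c) / T \<in> Lat"
  then obtain a b where ab: "a \<in> AA" "b \<in> AA" "(w - c) / T = a * w + b"
    unfolding Lat_iff by blast
  then have "1 * w + (- c) = (T * a) * w + T * b"
    using T_nonzero by (simp add: field_simps)
  then have Ta: "T * a = 1"
    using latt_coords_unique[of 1 "- c" "T * a" "T * b"] AA_const[OF Fq_1]
      AA_uminus[OF AA_const[OF c]] ab AA_T AA_mult by auto
  then have "real q * N a = 1"
    using N_mult[of T a] by (simp add: N_T)
  moreover have "N a \<ge> 1"
    using AA_N_ge_1 ab(1) Ta by force
  ultimately show False
    using mult_left_mono[of 1 "N a" "real q"] q_gt_1 by linarith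
qed

definition ew_ball :: "real \<Rightarrow> 'c" where
  "ew_ball R = expV (latt_ball R) (w / T)"

definition eone_ball :: "real \<Rightarrow> 'c" where
  "eone_ball R = expV (latt_ball R) (1 / T)"

definition g_ball :: "real \<Rightarrow> 'c" where
  "g_ball R = expV (Fq_line (eone_ball R)) (ew_ball R)"

lemma eone_ball_nonzero: "R \<ge> 0 \<Longrightarrow> eone_ball R \<noteq> 0"
  using expV_zero_iff[OF finite_latt_ball, of R "1 / T"] inverse_T_notin_Lat
  by (simp add: eone_ball_def latt_ball_def)

lemma expV_latt_ball_Fq_comb:
  assumes R: "R \<ge> 0" and c: "c1 \<in> FF" "c2 \<in> FF"
  shows "expV (latt_ball R) (c1 * (w / T) + c2 * (1 / T)) = c1 * ew_ball R + c2 * eone_ball R"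
proof -
  note V = Fq_subspace_latt_ball[OF R]
  show ?thesis
    by (simp only: expV_add[OF V] expV_smult[OF V c(1)] expV_smult[OF V c(2)] ew_ball_def eone_ball_def)
qed

lemma expV_latt_ball_image_Tinv_ball:
  assumes R: "R \<ge> real q ^ l"
  shows "expV (latt_ball R) ` Tinv_ball R = {c1 * ew_ball R + c2 * eone_ball R | c1 c2. c1 \<in> FF \<and> c2 \<in> FF}"
proof safe
  have R0: "R \<ge> 0"
    using R q_power_l_ge_1 by simp
  fix x assume "x \<in> Tinv_ball R"
  then obtain c1 c2 m where cm: "c1 \<in> FF" "c2 \<in> FF" "m \<in> latt_ball R"
      "x = c1 * (w / T) + c2 * (1 / T) + m"
    using Tinv_ball_decomp[OF R] by blast
  have "expV (latt_ball R) x = c1 * ew_ball R + c2 * eone_ball R"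
    using cm expV_latt_ball_Fq_comb[OF R0 cm(1,2)] expV_periodic[OF Fq_subspace_latt_ball[OF R0]] by simp
  then show "\<exists>c1 c2. expV (latt_ball R) x = c1 * ew_ball R + c2 * eone_ball R \<and> c1 \<in> FF \<and> c2 \<in> FF"
    using cm by blast
next
  fix c1 c2 assume c: "c1 \<in> FF" "c2 \<in> FF"
  have "R \<ge> 0"
    using R q_power_l_ge_1 by simp
  then have "c1 * ew_ball R + c2 * eone_ball R = expV (latt_ball R) (c1 * (w / T) + c2 * (1 / T))"
    using expV_latt_ball_Fq_comb[OF _ c] by simp
  then show "c1 * ew_ball R + c2 * eone_ball R \<in> expV (latt_ball R) ` Tinv_ball R"
    using Fq_comb_div_T_in_Tinv_ball[OF R c] by blast
qed

lemma g_ball_nonzero: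
  assumes R: "R \<ge> real q ^ l"
  shows "g_ball R \<noteq> 0"
proof
  have R0: "R \<ge> 0"
    using R q_power_l_ge_1 by simp
  assume "g_ball R = 0"
  then have "ew_ball R \<in> Fq_line (eone_ball R)"
    using expV_zero_iff[of "Fq_line (eone_ball R)"] Fq_subspaceD(1,2)[OF Fq_subspace_line]
    by (simp add: g_ball_def)
  then obtain c where c: "c \<in> FF" "ew_ball R = c * eone_ball R"
    by (auto simp: Fq_line_def)
  have "expV (latt_ball R) ((w - c) / T) = expV (latt_ball R) (1 * (w / T) + (- c) * (1 / T))"
    by (simp add: diff_divide_distrib)
  also have "\<dots> = 0"
    using expV_latt_ball_Fq_comb[OF R0 Fq_1 Fq_uminus[OF c(1)]] c by simp
  finally have "(w - c) / T \<in> latt_ball R"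
    using expV_zero_iff[OF finite_latt_ball, of R] R0 by (simp add: latt_ball_def)
  then show False
    using w_minus_Fq_div_T_notin_Lat[OF c(1)] by (simp add: latt_ball_def)
qed

text \<open>Going from \<open>latt_ball R\<close> to \<open>Tinv_ball R\<close> adds two generators, so by \<open>expV_comp\<close> the
  exponential of \<open>Tinv_ball R\<close> is that of \<open>latt_ball R\<close> followed by those of two lines.\<close>

lemma expV_Tinv_ball_factor:
  assumes R: "R \<ge> real q ^ l"
  shows "expV (Tinv_ball R) z = expV (Fq_line (g_ball R)) (expV (Fq_line (eone_ball R)) (expV (latt_ball R) z))"
proof -
  have R0: "R \<ge> 0"
    using R q_power_l_ge_1 by simp
  define U where "U = expV (latt_ball R) ` Tinv_ball R"
  note U_eq = expV_latt_ball_image_Tinv_ball[OF R, folded U_def]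
  have U: "Fq_subspace U"
    unfolding U_def
    by (rule Fq_subspace_expV_image[OF Fq_subspace_latt_ball[OF R0] Fq_subspace_Tinv_ball[OF R0]])
  have "expV (Tinv_ball R) z = expV U (expV (latt_ball R) z)"
    unfolding U_def
    by (rule expV_comp[OF Fq_subspace_latt_ball[OF R0] Fq_subspace_Tinv_ball[OF R0]
          latt_ball_subset_Tinv_ball])
  moreover have "Fq_line (eone_ball R) \<subseteq> U"
  proof
    fix x assume "x \<in> Fq_line (eone_ball R)"
    then obtain c where "c \<in> FF" "x = 0 * ew_ball R + c * eone_ball R"
      by (auto simp: Fq_line_def)
    then show "x \<in> U"
      unfolding U_eq using Fq_0 by blast
  qed
  then have "expV U y = expV (expV (Fq_line (eone_ball R)) ` U) (expV (Fq_line (eone_ball R)) y)" for y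
    by (rule expV_comp[OF Fq_subspace_line U])
  moreover have "expV (Fq_line (eone_ball R)) ` U = Fq_line (g_ball R)"
    unfolding U_eq g_ball_def by (rule expV_line_image_span)
  ultimately show ?thesis
    by simp
qed

lemma expV_latt_ball_T_times_expansion:
  assumes R: "R \<ge> real q ^ l"
  defines "a \<equiv> eone_ball R ^ (q - 1)" and "b \<equiv> g_ball R ^ (q - 1)"
  shows "expV (latt_ball (real q * R)) (T * z) = T * expV (latt_ball R) z
    + (- T / a - T / b) * expV (latt_ball R) z ^ q + T / (a ^ q * b) * expV (latt_ball R) z ^ (q ^ 2)"
proof -
  have R0: "R \<ge> 0"
    using R q_power_l_ge_1 by simp
  define X where "X = expV (latt_ball R) z"
  have a0: "a \<noteq> 0" and b0: "b \<noteq> 0"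
    using eone_ball_nonzero[OF R0] g_ball_nonzero[OF R] by (simp_all add: a_def b_def)
  have line1: "expV (Fq_line (eone_ball R)) X = X - X ^ q / a"
    using expV_line[OF eone_ball_nonzero[OF R0]] by (simp add: a_def)
  have line2: "expV (Fq_line (g_ball R)) Y = Y - Y ^ q / b" for Y
    using expV_line[OF g_ball_nonzero[OF R]] by (simp add: b_def)
  have frob: "(X - X ^ q / a) ^ q = X ^ q - X ^ (q ^ 2) / a ^ q"
    by (simp add: power_q_diff power_divide power_mult[symmetric] power2_eq_square)
  have "expV (latt_ball (real q * R)) (T * z) = T * expV (Tinv_ball R) z"
    by (rule expV_latt_ball_T_times[OF R0])
  also have "\<dots> = T * ((X - X ^ q / a) - (X ^ q - X ^ (q ^ 2) / a ^ q) / b)"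
    using expV_Tinv_ball_factor[OF R] line1 line2 frob by (simp add: X_def)
  also have "\<dots> = T * X + (- T / a - T / b) * X ^ q + T / (a ^ q * b) * X ^ (q ^ 2)"
    using a0 b0 by (simp add: field_simps)
  finally show ?thesis
    by (simp add: X_def)
qed

text \<open>\<open>N_torsion\<close> is the common absolute value of \<open>e\<^sub>\<Lambda>((c\<^sub>1 w + c\<^sub>2) / T)\<close> for \<open>c\<^sub>1 \<noteq> 0\<close>.\<close>

definition N_torsion :: real where
  "N_torsion = (if l = 0 then 1 / real q else real q ^ qpow_sum (l - 1))"

lemma N_torsion_pos: "N_torsion > 0"
  using q_gt_1 by (simp add: N_torsion_def)

lemma N_eL_torsion:
  assumes c: "c1 \<in> FF" "c1 \<noteq> 0" "c2 \<in> FF"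
  shows "N (eL ((c1 * w + c2) / T)) = N_torsion"
proof (cases "l = 0")
  case True
  have "N (c1 * w + c2) = max (N c1 * real q ^ l) (N c2)"
    by (rule N_latt_elem) (use c AA_const in auto)
  also have "\<dots> = 1"
    using True N_Fq[OF c(1,2)] N_Fq_le[OF c(3)] by simp
  finally have "N ((c1 * w + c2) / T) = 1 / real q"
    by (simp add: N_div_T)
  moreover have "1 / real q < 1"
    using q_gt_1 by simp
  moreover have "N_torsion = 1 / real q"
    unfolding N_torsion_def using True by simp
  ultimately show ?thesis
    using N_eL_small by simp
next
  case False
  have "N (eL ((c1 * w + c2) / T)) = real q ^ qpow_sum (l + 0 - 1)"
  proof (rule N_eL_quotient(2))
    show "c1 \<in> AA" "c2 \<in> AA" "T \<in> AA" "N c1 = real q ^ 0" "N T = real q ^ 1"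
      using c AA_const AA_T N_Fq[OF c(1,2)] by (simp_all add: N_T)
    show "N c2 \<le> N c1 * real q ^ l"
      using N_Fq_le[OF c(3)] N_Fq[OF c(1,2)] q_power_l_ge_1 by simp
    show "0 < (1::nat)" "1 \<le> l + 0"
      using False by auto
  qed
  then show ?thesis
    using False by (simp add: N_torsion_def)
qed

definition ew :: 'c where
  "ew = eL (w / T)"

definition eone :: 'c where
  "eone = eL (1 / T)"

definition glim :: 'c where
  "glim = ew - ew ^ q / eone ^ (q - 1)"

definition phi1 :: 'c where
  "phi1 = - T / eone ^ (q - 1) - T / glim ^ (q - 1)"

definition phi2 :: 'c where
  "phi2 = T / ((eone ^ (q - 1)) ^ q * glim ^ (q - 1))"

lemma N_eone: "N eone = 1 / real q"
  using N_eL_small[of "1 / T"] q_gt_1 by (simp add: eone_def N_div_T)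

lemma eone_nonzero: "eone \<noteq> 0"
  using N_eone q_gt_1 by auto

lemma N_glim: "N glim = N_torsion * (real q * N_torsion) ^ (q - 1)"
proof -
  have "glim = expV (Fq_line eone) ew"
    using expV_line[OF eone_nonzero] by (simp add: glim_def)
  then have "N glim = N ew * (\<Prod>c\<in>FF - {0}. N (1 - ew / (c * eone)))"
    by (simp add: expV_line_prod[OF eone_nonzero] N_mult N_prod)
  also have "N ew = N_torsion"
    using N_eL_torsion[OF Fq_1 _ Fq_0] by (simp add: ew_def)
  also have "(\<Prod>c\<in>FF - {0}. N (1 - ew / (c * eone))) = (\<Prod>c\<in>FF - {0}. real q * N_torsion)"
  proof (rule prod.cong[OF refl])
    fix c assume c: "c \<in> FF - {0}"
    then have c_eone: "c * eone \<noteq> 0"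
      using eone_nonzero by simp
    have "c * eone - ew = eL (c * (1 / T)) - eL (w / T)"
      using eL_smult[of c "1 / T"] c by (simp add: eone_def ew_def)
    also have "\<dots> = eL (((- 1) * w + c) / T)"
      by (simp add: eL_diff[symmetric] diff_divide_distrib)
    finally have "N (c * eone - ew) = N_torsion"
      using N_eL_torsion[OF Fq_minus_1 _ ] c by simp
    moreover have "1 - ew / (c * eone) = (c * eone - ew) / (c * eone)"
      using c_eone by (simp add: field_simps)
    moreover have "N (c * eone) = 1 / real q"
      using c N_Fq N_eone by (simp add: N_mult)
    ultimately show "N (1 - ew / (c * eone)) = real q * N_torsion"
      by (simp add: N_divide)
  qed
  also have "\<dots> = (real q * N_torsion) ^ (q - 1)"
    using card_Fq finite_Fq by (simp add: card_Diff_singleton)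
  finally show ?thesis .
qed

lemma glim_nonzero: "glim \<noteq> 0"
proof
  assume "glim = 0"
  then have "N glim = 0"
    by simp
  moreover have "N_torsion * (real q * N_torsion) ^ (q - 1) > 0"
    using N_torsion_pos q_gt_1 by simp
  ultimately show False
    using N_glim by linarith
qed

text \<open>Letting \<open>R \<rightarrow> \<infinity>\<close> in \<open>expV_latt_ball_T_times_expansion\<close>, along the radii \<open>q k\<close>.\<close>

lemma eL_T_times: "eL (T * z) = T * eL z + phi1 * eL z ^ q + phi2 * eL z ^ (q ^ 2)"
proof -
  obtain K :: nat where K: "real q ^ l \<le> real K"
    using real_arch_simple by blast
  define a where "a k = eone_ball (real k) ^ (q - 1)" for k
  define b where "b k = g_ball (real k) ^ (q - 1)" for k
  define rhs where "rhs k = T * exp_partial z k + (- T / a k - T / b k) * exp_partial z k ^ q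
    + T / (a k ^ q * b k) * exp_partial z k ^ (q ^ 2)" for k
  have "exp_partial (T * z) (q * k) = rhs k" if "k \<ge> K" for k
  proof -
    have "real k \<ge> real q ^ l"
      using K that by simp
    then show ?thesis
      unfolding rhs_def a_def b_def exp_partial_def
      using expV_latt_ball_T_times_expansion[of "real k" z] by simp
  qed
  moreover have "conv_to N (\<lambda>k. exp_partial (T * z) (q * k)) (eL (T * z))"
    by (rule conv_to_subseq[OF eL_conv]) (use q_ge_2 in simp)
  ultimately have lhs: "conv_to N rhs (eL (T * z))"
    using conv_to_eventually_eq eventually_sequentially by blast
  have ew: "conv_to N (\<lambda>k. ew_ball (real k)) ew"
    using eL_conv by (simp add: ew_ball_def ew_def exp_partial_def[symmetric])
  have eone: "conv_to N (\<lambda>k. eone_ball (real k)) eone"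
    using eL_conv by (simp add: eone_ball_def eone_def exp_partial_def[symmetric])
  have g_ball_eq: "g_ball (real k) = ew_ball (real k) - ew_ball (real k) ^ q / eone_ball (real k) ^ (q - 1)"
    for k
    using expV_line eone_ball_nonzero by (simp add: g_ball_def)
  have g: "conv_to N (\<lambda>k. g_ball (real k)) glim"
    unfolding g_ball_eq glim_def
    by (intro conv_to_diff conv_to_divide conv_to_power ew eone) (use eone_nonzero in simp)
  have "conv_to N rhs (T * eL z + phi1 * eL z ^ q + phi2 * eL z ^ (q ^ 2))"
    unfolding rhs_def phi1_def phi2_def a_def b_def
    by (intro conv_to_add conv_to_mult conv_to_diff conv_to_divide conv_to_power conv_to_const
        eL_conv eone g conv_to_uminus) (use eone_nonzero glim_nonzero in simp_all)
  then show ?thesis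
    by (rule conv_to_unique[OF lhs])
qed

lemma inj_eL_inverse_T_powers: "inj (\<lambda>j::nat. eL (1 / T ^ Suc j))"
proof (rule injI)
  fix i j :: nat
  assume eq: "eL (1 / T ^ Suc i) = eL (1 / T ^ Suc j)"
  have N_eL: "N (eL (1 / T ^ Suc k)) = 1 / real q ^ Suc k" for k
  proof -
    have "N (1 / T ^ Suc k) = 1 / real q ^ Suc k"
      by (simp only: N_divide N_1 N_power N_T)
    moreover have "1 / real q ^ Suc k < 1"
      using one_less_power[OF q_gt_1, of "Suc k"] by simp
    ultimately show ?thesis
      using N_eL_small by simp
  qed
  have "real q ^ Suc i = real q ^ Suc j"
    using arg_cong[OF eq, of N] by (simp only: N_eL) simp
  then show "i = j"
    using power_inject_exp[of "real q" "Suc i" "Suc j"] q_gt_1 by simp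
qed

text \<open>The coefficient of \<open>X^(q\<^sup>2)\<close> is unique because \<open>e\<^sub>\<Lambda>\<close> takes infinitely many values.\<close>

lemma DeltaT_eq_phi2: "DeltaT q N T Lat = phi2"
  unfolding DeltaT_def
proof (rule the_equality)
  show "\<exists>l1. \<forall>z. eL (T * z) = T * eL z + l1 * eL z ^ q + phi2 * eL z ^ (q ^ 2)"
    using eL_T_times by blast
next
  fix l2 assume "\<exists>l1. \<forall>z. eL (T * z) = T * eL z + l1 * eL z ^ q + l2 * eL z ^ (q ^ 2)"
  then obtain l1 where l1: "\<And>z. eL (T * z) = T * eL z + l1 * eL z ^ q + l2 * eL z ^ (q ^ 2)"
    by blast
  define p where "p = monom (phi1 - l1) q + monom (phi2 - l2) (q ^ 2)"
  have root: "poly p (eL z) = 0" for z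
    using eL_T_times[of z] l1[of z] by (simp add: p_def poly_monom algebra_simps)
  have "p = 0"
  proof (rule ccontr)
    assume "p \<noteq> 0"
    moreover have "range (\<lambda>j::nat. eL (1 / T ^ Suc j)) \<subseteq> {x. poly p x = 0}"
      using root by auto
    ultimately have "finite (range (\<lambda>j::nat. eL (1 / T ^ Suc j)))"
      using poly_roots_finite finite_subset by blast
    then show False
      using inj_eL_inverse_T_powers range_inj_infinite by blast
  qed
  moreover have "coeff p (q ^ 2) = phi2 - l2"
    using q_ge_2 by (simp add: p_def coeff_monom power2_eq_square)
  ultimately show "l2 = phi2"
    by simp
qed

lemma logv_eq_powr: "N x = real q powr r \<Longrightarrow> logv q N x = ereal r"
  using q_gt_1 by (auto simp: logv_def)

lemma log_N_torsion: "(real q - 1) * log (real q) N_torsion = real q ^ l - real q"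
proof (cases "l = 0")
  case False
  then have "(real q - 1) * log (real q) N_torsion = real (qpow_sum (l - 1)) * (real q - 1)"
    using q_gt_1 by (simp add: N_torsion_def log_nat_power)
  also have "\<dots> = real q ^ l - real q"
    using qpow_sum_eq[of "l - 1"] False by simp
  finally show ?thesis .
next
  case True
  then have "log (real q) N_torsion = - 1"
    unfolding N_torsion_def using q_gt_1 by (simp add: log_divide)
  then show ?thesis
    using True by simp
qed

lemma log_N_phi2: "log (real q) (N phi2) = real q ^ 2 + real q - real q ^ (l + 1)"
proof -
  define e where "e = log (real q) N_torsion"
  have q: "real q > 0" "real q \<noteq> 1" "real (q - 1) = real q - 1"
    using q_gt_1 q_ge_2 by auto
  have "N phi2 = real q
      / (((1 / real q) ^ (q - 1)) ^ q * (N_torsion * (real q * N_torsion) ^ (q - 1)) ^ (q - 1))"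
    by (simp add: phi2_def N_divide N_mult N_power N_T N_eone N_glim)
  then have "log (real q) (N phi2) = 1 + real q * (real q - 1) - (real q - 1) * (e + (real q - 1) * (1 + e))"
    using q N_torsion_pos by (simp add: log_divide log_mult log_nat_power e_def algebra_simps)
  also have "\<dots> = real q - real q * ((real q - 1) * e)"
    by (simp add: algebra_simps)
  also have "\<dots> = real q ^ 2 + real q - real q ^ (l + 1)"
    unfolding e_def log_N_torsion by (simp add: algebra_simps power2_eq_square)
  finally show ?thesis .
qed

theorem logv_DeltaT: "logv q N (DeltaT q N T Lat) = ereal (real q ^ 2 + real q - real q ^ (l + 1))"
proof -
  have "phi2 \<noteq> 0"
    using T_nonzero eone_nonzero glim_nonzero by (simp add: phi2_def)
  then show ?thesis
    using log_N_phi2 by (simp add: DeltaT_eq_phi2 logv_def)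
qed

lemma N_division_point:
  assumes A: "a1 \<in> AA" "a2 \<in> AA"
    and n: "N n = real q ^ kn"
    and a1: "a1 \<noteq> 0 \<Longrightarrow> N a1 = real q ^ k1" and a2: "a2 \<noteq> 0 \<Longrightarrow> N a2 = real q ^ k2"
  shows "a1 \<noteq> 0 \<Longrightarrow> a2 = 0 \<or> k2 \<le> k1 + l \<Longrightarrow>
      N ((a1 * w + a2) / n) = real q powr (real l + real k1 - real kn)"
    and "a2 \<noteq> 0 \<Longrightarrow> a1 = 0 \<or> k1 + l < k2 \<Longrightarrow>
      N ((a1 * w + a2) / n) = real q powr (real k2 - real kn)"
proof -
  have q: "real q > 0"
    using q_gt_1 by simp
  have powr: "real q ^ i / real q ^ j = real q powr (real i - real j)" for i j
    using q by (simp add: powr_realpow[symmetric] powr_diff)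
  have num: "N (a1 * w + a2) = max (N a1 * real q ^ l) (N a2)"
    by (rule N_latt_elem[OF A])
  show "N ((a1 * w + a2) / n) = real q powr (real l + real k1 - real kn)"
    if "a1 \<noteq> 0" "a2 = 0 \<or> k2 \<le> k1 + l"
  proof -
    have "N a2 \<le> N a1 * real q ^ l"
      using that a1 a2 q_gt_1 by (cases "a2 = 0") (auto simp: power_add[symmetric])
    then have "N (a1 * w + a2) = real q ^ (k1 + l)"
      using num a1 that(1) by (simp add: power_add)
    then show ?thesis
      using powr[of "k1 + l" kn] n by (simp add: N_divide add.commute)
  qed
  show "N ((a1 * w + a2) / n) = real q powr (real k2 - real kn)"
    if "a2 \<noteq> 0" "a1 = 0 \<or> k1 + l < k2"
  proof -
    have "N a1 * real q ^ l < N a2"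
      using that a1 a2 q_gt_1 by (cases "a1 = 0") (auto simp: power_add[symmetric])
    then have "N (a1 * w + a2) = real q ^ k2"
      using num a2 that(1) by simp
    then show ?thesis
      using powr[of k2 kn] n by (simp add: N_divide)
  qed
qed

lemma logv_eL_small:
  assumes "x \<noteq> 0" "logv q N x < 0"
  shows "logv q N (eL x) = logv q N x"
proof -
  have "N x < 1"
    using assms q_gt_1 N_pos[OF assms(1)] by (simp add: logv_def)
  then have "N (eL x) = N x"
    by (rule N_eL_small)
  moreover have "eL x \<noteq> 0"
    using calculation N_pos[OF assms(1)] by auto
  ultimately show ?thesis
    using assms(1) by (simp add: logv_def)
qed

lemma logv_eL_quotient:
  assumes a1: "a1 \<in> AA" "N a1 = real q ^ k1" and n: "n \<in> AA" "N n = real q ^ kn"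
    and a2: "a2 \<in> AA" "N a2 \<le> N a1 * real q ^ l"
    and k: "k1 < kn" "kn \<le> l + k1"
  shows "logv q N (eL ((a1 * w + a2) / n))
    = ereal (real q / (real q - 1) * (real q powr (real l + real k1 - real kn) - 1))"
proof -
  have "N (eL ((a1 * w + a2) / n)) = real q powr real (qpow_sum (l + k1 - kn))"
    using N_eL_quotient(2)[OF a1 n a2 k] q_gt_1 by (simp add: powr_realpow)
  moreover have "real (qpow_sum (l + k1 - kn))
      = real q / (real q - 1) * (real q powr (real l + real k1 - real kn) - 1)"
    using qpow_sum_eq[of "l + k1 - kn"] q_gt_1 k
    by (simp add: field_simps powr_realpow[symmetric] of_nat_diff)
  ultimately show ?thesis
    by (simp add: logv_eq_powr)
qed

lemma logv_division_point:
  assumes fn: "Fq_poly fn" and f1: "Fq_poly f1" and f2: "Fq_poly f2" and fn_deg: "degree fn > 0"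
    and nz: "poly f1 T \<noteq> 0 \<or> poly f2 T \<noteq> 0"
    and d1: "degree f1 < degree fn" and d2: "degree f2 < degree fn"
  shows "let u = (poly f1 T * w + poly f2 T) / poly fn T;
               d1 = real (degree f1); d2 = real (degree f2); dn = real (degree fn) in
           (poly f1 T \<noteq> 0 \<and> (poly f2 T = 0 \<or> d2 \<le> d1 + real l)
              \<longrightarrow> logv q N u = ereal (real l + d1 - dn)) \<and>
           (poly f2 T \<noteq> 0 \<and> (poly f1 T = 0 \<or> d2 > d1 + real l)
              \<longrightarrow> logv q N u = ereal (d2 - dn)) \<and>
           (logv q N u \<ge> 0 \<longrightarrow> logv q N (expL N (latt q T w) u)
              = ereal (real q / (real q - 1) * (real q powr (real l + d1 - dn) - 1))) \<and>
           (logv q N u < 0 \<longrightarrow> logv q N (expL N (latt q T w) u) = logv q N u)"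
proof -
  define a1 a2 n where "a1 = poly f1 T" and "a2 = poly f2 T" and "n = poly fn T"
  define k1 k2 kn where "k1 = degree f1" and "k2 = degree f2" and "kn = degree fn"
  define u where "u = (a1 * w + a2) / n"
  have A: "a1 \<in> AA" "a2 \<in> AA" "n \<in> AA"
    using fn f1 f2 AA_iff by (auto simp: a1_def a2_def n_def)
  have Nn: "N n = real q ^ kn"
    using N_poly_T[OF fn] fn_deg by (cases "fn = 0") (auto simp: n_def kn_def)
  have Na1: "a1 \<noteq> 0 \<Longrightarrow> N a1 = real q ^ k1"
    using N_poly_T[OF f1] by (cases "f1 = 0") (auto simp: a1_def k1_def)
  have Na2: "a2 \<noteq> 0 \<Longrightarrow> N a2 = real q ^ k2"
    using N_poly_T[OF f2] by (cases "f2 = 0") (auto simp: a2_def k2_def)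
  note Nu = N_division_point[OF A(1,2) Nn Na1 Na2, folded u_def]
  have case1: "a1 \<noteq> 0 \<and> (a2 = 0 \<or> real k2 \<le> real k1 + real l) \<longrightarrow>
      logv q N u = ereal (real l + real k1 - real kn)"
    using Nu(1) logv_eq_powr by (auto simp flip: of_nat_add)
  have case2: "a2 \<noteq> 0 \<and> (a1 = 0 \<or> real k2 > real k1 + real l) \<longrightarrow>
      logv q N u = ereal (real k2 - real kn)"
    using Nu(2) logv_eq_powr by (auto simp flip: of_nat_add)
  have u0: "u \<noteq> 0"
    using Nu q_gt_1 nz by (cases "a1 \<noteq> 0 \<and> (a2 = 0 \<or> k2 \<le> k1 + l)")
      (auto simp: a1_def a2_def)
  have large: "logv q N (eL u) = ereal (real q / (real q - 1) * (real q powr (real l + real k1 - real kn) - 1))"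
    if lu: "logv q N u \<ge> 0"
  proof -
    have "k2 < kn"
      using d2 by (simp add: k2_def kn_def)
    then have "\<not> (a2 \<noteq> 0 \<and> (a1 = 0 \<or> real k2 > real k1 + real l))"
      using case2 lu by auto
    then have a1: "a1 \<noteq> 0" and a2: "a2 = 0 \<or> k2 \<le> k1 + l"
      using nz by (auto simp: a1_def a2_def)
    then have "logv q N u = ereal (real l + real k1 - real kn)"
      using case1 by (auto simp flip: of_nat_add)
    then have "real kn \<le> real (l + k1)"
      using lu by simp
    then have "kn \<le> l + k1"
      by (simp only: of_nat_le_iff)
    moreover have "N a2 \<le> N a1 * real q ^ l"
      using a2 Na1[OF a1] Na2 q_gt_1 N_nonneg[of a1] by (cases "a2 = 0") (auto simp flip: power_add)
    moreover have "k1 < kn"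
      using d1 by (simp add: k1_def kn_def)
    ultimately show ?thesis
      unfolding u_def using logv_eL_quotient[OF A(1) Na1[OF a1] A(3) Nn A(2)] by blast
  qed
  show ?thesis
    using case1 case2 large logv_eL_small[OF u0]
    unfolding Let_def u_def a1_def a2_def n_def k1_def k2_def kn_def by simp
qed

end

theorem mainTheorem15:
  fixes q :: nat and absv :: "'c::field \<Rightarrow> real" and T w :: 'c and l :: nat
  assumes C: "is_Cinfty q absv T"
    and w_notin: "w \<notin> Kinf q absv T"
    and w_abs: "absv w = real q ^ l" and w_absi: "abs_i q absv T w = real q ^ l"
  shows "logv q absv (DeltaT q absv T (latt q T w))
           = ereal (real q ^ 2 + real q - real q ^ (l + 1))
     \<and> (\<forall>fn f1 f2 :: 'c poly.
          (\<forall>i. coeff fn i \<in> Fq q) \<and> (\<forall>i. coeff f1 i \<in> Fq q) \<and> (\<forall>i. coeff f2 i \<in> Fq q) \<and>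
          degree fn > 0 \<and> (poly f1 T \<noteq> 0 \<or> poly f2 T \<noteq> 0) \<and>
          degree f1 < degree fn \<and> degree f2 < degree fn \<longrightarrow>
          (let u = (poly f1 T * w + poly f2 T) / poly fn T;
               d1 = real (degree f1); d2 = real (degree f2); dn = real (degree fn) in
           (poly f1 T \<noteq> 0 \<and> (poly f2 T = 0 \<or> d2 \<le> d1 + real l)
              \<longrightarrow> logv q absv u = ereal (real l + d1 - dn)) \<and>
           (poly f2 T \<noteq> 0 \<and> (poly f1 T = 0 \<or> d2 > d1 + real l)
              \<longrightarrow> logv q absv u = ereal (d2 - dn)) \<and>
           (logv q absv u \<ge> 0 \<longrightarrow> logv q absv (expL absv (latt q T w) u)
              = ereal (real q / (real q - 1) * (real q powr (real l + d1 - dn) - 1))) \<and>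
           (logv q absv u < 0 \<longrightarrow> logv q absv (expL absv (latt q T w) u) = logv q absv u)))"
proof -
  interpret rank2_lattice absv q T w l
    using C w_abs w_absi by unfold_locales (auto simp: is_Cinfty_def)
  show ?thesis
    using logv_DeltaT logv_division_point[unfolded Fq_poly_def] by blast
qed

end
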